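(* Let $\ell\in\{\ell_{lin},\ell_{log}\}$, suppose $[X\ Z]$ is $s$-regular ($s=s_1+s_2$), and let $\beta^*$ be the limit of the sequence $\{\beta^k\}$ generated by GPNA, with $\{u^k\}$ the associated projected-gradient points. Then for all sufficiently large $k$: (1) for $j=1,2$: if $\|\beta_j^*\|_0<s_j$ then $\Gamma(\beta_j^* )\subseteq\Gamma(\beta_j^k)\cap\Gamma(u_j^k)$, and if $\|\beta_j^*\|_0=s_j$ then $\Gamma(\beta_j^* )=\Gamma(\beta_j^k)=\Gamma(u_j^k)$; (2) if the parameter $\sigma$ of GPNA satisfies $\sigma\in(0,l_f/2)$, then the Newton step is accepted at iteration $k$, i.e. one of the conditions (C1)–(C4) holds, the Newton system has a solution $v^k$, it satisfies $f(v^k)\le f(u^k)-\frac\sigma2\|v^k-u^k\|^2$, and hence $\beta^{k+1}=v^k$.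
   Context: Data: $X\in\mathbb{R}^{n\times p_1}$, $Z\in\mathbb{R}^{n\times p_2}$ with rows $x_i,z_i$; $y\in\mathbb{R}^n$ ($y\in\{0,1\}^n$ for $\ell_{log}$); $a,b,c>0$; integers $1\le s_j\le p_j$. Losses $\ell_{lin}(\beta;X,y)=\frac12\sum_i(y_i-\langle x_i,\beta\rangle)^2$, $\ell_{log}(\beta;X,y)=\sum_i(\log(1+\exp\langle x_i,\beta\rangle)-y_i\langle x_i,\beta\rangle)$. Objective $f(\beta)=\frac1n[a\ell(\beta_1;X,y)+b\ell(\beta_2;Z,y)+\frac c2\|X\beta_1-Z\beta_2\|^2]$, $\beta=(\beta_1;\beta_2)$. A matrix is $s$-regular if any $s$ of its columns are linearly independent. $\Sigma_j=\{v\in\mathbb{R}^{p_j}:\|v\|_0\le s_j\}$, $\Sigma=\{\beta:\beta_j\in\Sigma_j\}$; $\Pi_{\Sigma_j}(w)=\arg\min_{u\in\Sigma_j}\|w-u\|$ (set-valued); $\nabla_jf$ is the gradient in $\beta_j$; $\Gamma(v)$ is the support. Constant $l_f$: for $\ell_{log}$, $l_f=\min_{|T|\le s}\lambda_{\min}\big(\frac cn\begin{bmatrix}X^\top X&-X^\top Z\\-Z^\top X&Z^\top Z\end{bmatrix}_{TT}\big)$; for $\ell_{lin}$, $l_f=\min_{|T|\le s}\lambda_{\min}(Q_{TT})$ with $Q=\frac1n\begin{bmatrix}(a+c)X^\top X&-cX^\top Z\\-cZ^\top X&(b+c)Z^\top Z\end{bmatrix}$; minima over $T\subseteq[p_1+p_2]$.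 GPNA (run without stopping): parameters $\sigma>0$, $\epsilon>0$, $\alpha_0\in(0,1]$, $\gamma\in(0,1)$, start $\beta^0\in\Sigma$. At iteration $k$, for $\alpha>0$ let $\beta^k(\alpha)=(\beta_1^k(\alpha);\beta_2^k(\alpha))$, $\beta_j^k(\alpha)\in\Pi_{\Sigma_j}(\beta_j^k-\alpha\nabla_jf(\beta^k))$. Let $q_k$ be the smallest nonnegative integer with $f(\beta^k(\alpha_0\gamma^{q_k}))\le f(\beta^k)-\frac\sigma2\|\beta^k(\alpha_0\gamma^{q_k})-\beta^k\|^2$; $\alpha_k=\alpha_0\gamma^{q_k}$, $u^k=\beta^k(\alpha_k)$, $\Gamma_k=\Gamma(u^k)$, $H^k=\nabla^2f(u^k)$, tentatively $\beta^{k+1}=u^k$. If one of (C1) $\Gamma(\beta_1^k)=\Gamma(u_1^k)$ and $\Gamma(\beta_2^k)=\Gamma(u_2^k)$; (C2) $\|\nabla_1f(u^k)\|<\epsilon$ and $\Gamma(\beta_2^k)=\Gamma(u_2^k)$; (C3) $\|\nabla_2f(u^k)\|<\epsilon$ and $\Gamma(\beta_1^k)=\Gamma(u_1^k)$; (C4) $\|\nabla_1f(u^k)\|<\epsilon$ and $\|\nabla_2f(u^k)\|<\epsilon$ holds, and the Newton system $(H^k)_{\Gamma_k\Gamma_k}(v_{\Gamma_k}-u^k_{\Gamma_k})=-(\nabla f(u^k))_{\Gamma_k}$, $v_{\overline{\Gamma}_k}=0$ has a solution $v^k$ with $f(v^k)\le f(u^k)-\frac\sigma2\|v^k-u^k\|^2$,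 then set $\beta^{k+1}=v^k$ instead. *)

theory Defs
  imports "HOL-Analysis.Analysis"
begin

datatype loss_kind = Lin | Log

text \<open>Observations indexed by the finite type 'n (n = CARD('n)); X is n x p1 (p1 = CARD('p1)),
  Z is n x p2.  A parameter vector is a pair (beta1, beta2).\<close>

definition loss :: "loss_kind \<Rightarrow> real^'p \<Rightarrow> real^'p^'n \<Rightarrow> real^'n \<Rightarrow> real" where
  "loss L bt A y = (case L of
      Lin \<Rightarrow> (1/2) * (\<Sum>i\<in>UNIV. (y$i - (A *v bt)$i)^2)
    | Log \<Rightarrow> (\<Sum>i\<in>UNIV. ln (1 + exp ((A *v bt)$i)) - y$i * (A *v bt)$i))"

definition fobj :: "loss_kind \<Rightarrow> real \<Rightarrow> real \<Rightarrow> real \<Rightarrow> real^'p1^'n \<Rightarrow> real^'p2^'n \<Rightarrow> real^'n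
    \<Rightarrow> (real^'p1) \<times> (real^'p2) \<Rightarrow> real" where
  "fobj L a b c X Z y bt = (1 / real CARD('n)) *
     (a * loss L (fst bt) X y + b * loss L (snd bt) Z y
      + (c/2) * (norm (X *v fst bt - Z *v snd bt))^2)"

definition gradient :: "('a::real_inner \<Rightarrow> real) \<Rightarrow> 'a \<Rightarrow> 'a" where
  "gradient F x = (THE g. (F has_derivative (\<lambda>h. g \<bullet> h)) (at x))"

definition hessian :: "('a::real_inner \<Rightarrow> real) \<Rightarrow> 'a \<Rightarrow> 'a \<Rightarrow> 'a" where
  "hessian F x = (THE H. (gradient F has_derivative H) (at x))"

definition supp :: "real^'p \<Rightarrow> 'p set" where
  "supp v = {i. v$i \<noteq> 0}"

definition l0 :: "real^'p \<Rightarrow> nat" where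
  "l0 v = card (supp v)"

text \<open>Coordinates of a stacked vector (beta1; beta2), indexed by 'p1 + 'p2.\<close>
fun comp :: "(real^'p1) \<times> (real^'p2) \<Rightarrow> 'p1 + 'p2 \<Rightarrow> real" where
  "comp w (Inl i) = fst w $ i"
| "comp w (Inr j) = snd w $ j"

definition suppP :: "(real^'p1) \<times> (real^'p2) \<Rightarrow> ('p1 + 'p2) set" where
  "suppP w = {t. comp w t \<noteq> 0}"

definition SparseSet :: "nat \<Rightarrow> (real^'p) set" where
  "SparseSet s = {v. l0 v \<le> s}"

definition proj_sparse :: "nat \<Rightarrow> real^'p \<Rightarrow> (real^'p) set" where
  "proj_sparse s w = {u \<in> SparseSet s. \<forall>u'\<in>SparseSet s. norm (w - u) \<le> norm (w - u')}"

definition cols :: "real^'p1^'n \<Rightarrow> real^'p2^'n \<Rightarrow> 'p1 + 'p2 \<Rightarrow> real^'n" where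
  "cols X Z t = (case t of Inl i \<Rightarrow> column i X | Inr j \<Rightarrow> column j Z)"

definition s_regular :: "nat \<Rightarrow> ('k::finite \<Rightarrow> real^'n) \<Rightarrow> bool" where
  "s_regular s col \<longleftrightarrow> (\<forall>T. card T = s \<longrightarrow>
      (\<forall>w. (\<Sum>t\<in>T. w t *\<^sub>R col t) = 0 \<longrightarrow> (\<forall>t\<in>T. w t = 0)))"

definition gram :: "real^'p^'n \<Rightarrow> real^'q^'n \<Rightarrow> 'p \<Rightarrow> 'q \<Rightarrow> real" where
  "gram A B i j = (\<Sum>r\<in>UNIV. A$r$i * B$r$j)"

fun blk :: "('a \<Rightarrow> 'a \<Rightarrow> real) \<Rightarrow> ('a \<Rightarrow> 'b \<Rightarrow> real) \<Rightarrow> ('b \<Rightarrow> 'a \<Rightarrow> real) \<Rightarrow> ('b \<Rightarrow> 'b \<Rightarrow> real)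
    \<Rightarrow> 'a + 'b \<Rightarrow> 'a + 'b \<Rightarrow> real" where
  "blk A B C D (Inl i) (Inl j) = A i j"
| "blk A B C D (Inl i) (Inr j) = B i j"
| "blk A B C D (Inr i) (Inl j) = C i j"
| "blk A B C D (Inr i) (Inr j) = D i j"

definition eig_sub :: "('k \<Rightarrow> 'k \<Rightarrow> real) \<Rightarrow> 'k set \<Rightarrow> real \<Rightarrow> bool" where
  "eig_sub M T lam \<longleftrightarrow> (\<exists>x::'k \<Rightarrow> real. (\<exists>i\<in>T. x i \<noteq> 0) \<and> (\<forall>i. i \<notin> T \<longrightarrow> x i = 0) \<and>
      (\<forall>i\<in>T. (\<Sum>j\<in>T. M i j * x j) = lam * x i))"

definition min_sub_eig :: "nat \<Rightarrow> ('k \<Rightarrow> 'k \<Rightarrow> real) \<Rightarrow> real" where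
  "min_sub_eig s M = Min {lam. \<exists>T. card T \<le> s \<and> eig_sub M T lam}"

definition lf_matrix :: "loss_kind \<Rightarrow> real \<Rightarrow> real \<Rightarrow> real \<Rightarrow> real^'p1^'n \<Rightarrow> real^'p2^'n
    \<Rightarrow> 'p1 + 'p2 \<Rightarrow> 'p1 + 'p2 \<Rightarrow> real" where
  "lf_matrix L a b c X Z = (let n = real CARD('n) in case L of
     Log \<Rightarrow> blk (\<lambda>i j. c/n * gram X X i j) (\<lambda>i j. - c/n * gram X Z i j)
                (\<lambda>i j. - c/n * gram Z X i j) (\<lambda>i j. c/n * gram Z Z i j)
   | Lin \<Rightarrow> blk (\<lambda>i j. (a+c)/n * gram X X i j) (\<lambda>i j. - c/n * gram X Z i j)
                (\<lambda>i j. - c/n * gram Z X i j) (\<lambda>i j. (b+c)/n * gram Z Z i j))"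

definition l_f :: "loss_kind \<Rightarrow> real \<Rightarrow> real \<Rightarrow> real \<Rightarrow> real^'p1^'n \<Rightarrow> real^'p2^'n \<Rightarrow> nat \<Rightarrow> real" where
  "l_f L a b c X Z s = min_sub_eig s (lf_matrix L a b c X Z)"

definition newton_sol :: "((real^'p1) \<times> (real^'p2) \<Rightarrow> real) \<Rightarrow> (real^'p1) \<times> (real^'p2)
    \<Rightarrow> (real^'p1) \<times> (real^'p2) \<Rightarrow> bool" where
  "newton_sol F u v \<longleftrightarrow> (\<forall>t. t \<notin> suppP u \<longrightarrow> comp v t = 0) \<and>
     (\<forall>t\<in>suppP u. comp (hessian F u (v - u)) t = - comp (gradient F u) t)"

definition switch_cond :: "((real^'p1) \<times> (real^'p2) \<Rightarrow> real) \<Rightarrow> real \<Rightarrow> (real^'p1) \<times> (real^'p2)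
    \<Rightarrow> (real^'p1) \<times> (real^'p2) \<Rightarrow> bool" where
  "switch_cond F \<epsilon> bk uk \<longleftrightarrow>
     (supp (fst bk) = supp (fst uk) \<and> supp (snd bk) = supp (snd uk))
   \<or> (norm (fst (gradient F uk)) < \<epsilon> \<and> supp (snd bk) = supp (snd uk))
   \<or> (norm (snd (gradient F uk)) < \<epsilon> \<and> supp (fst bk) = supp (fst uk))
   \<or> (norm (fst (gradient F uk)) < \<epsilon> \<and> norm (snd (gradient F uk)) < \<epsilon>)"

text \<open>(beta, u, q, P, v) is a run of GPNA (without stopping) for objective F with sparsity
  levels s1, s2.  P k alpha is the chosen projected point beta^k(alpha); q k is the line-search
  exponent; u k = beta^k(alpha_k); v k is the accepted Newton point when the Newton step is taken.\<close>
definition gpna_run :: "((real^'p1) \<times> (real^'p2) \<Rightarrow> real) \<Rightarrow> nat \<Rightarrow> nat \<Rightarrow> real \<Rightarrow> real \<Rightarrow> real \<Rightarrow> real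
    \<Rightarrow> (nat \<Rightarrow> (real^'p1) \<times> (real^'p2)) \<Rightarrow> (nat \<Rightarrow> (real^'p1) \<times> (real^'p2)) \<Rightarrow> (nat \<Rightarrow> nat)
    \<Rightarrow> (nat \<Rightarrow> real \<Rightarrow> (real^'p1) \<times> (real^'p2)) \<Rightarrow> (nat \<Rightarrow> (real^'p1) \<times> (real^'p2)) \<Rightarrow> bool" where
  "gpna_run F s1 s2 \<sigma> \<epsilon> \<alpha>0 \<gamma> \<beta> u q P v \<longleftrightarrow>
     fst (\<beta> 0) \<in> SparseSet s1 \<and> snd (\<beta> 0) \<in> SparseSet s2 \<and>
     (\<forall>k. \<forall>\<alpha>>0.
        fst (P k \<alpha>) \<in> proj_sparse s1 (fst (\<beta> k) - \<alpha> *\<^sub>R fst (gradient F (\<beta> k))) \<and>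
        snd (P k \<alpha>) \<in> proj_sparse s2 (snd (\<beta> k) - \<alpha> *\<^sub>R snd (gradient F (\<beta> k)))) \<and>
     (\<forall>k. F (P k (\<alpha>0 * \<gamma> ^ q k)) \<le> F (\<beta> k) - \<sigma>/2 * (norm (P k (\<alpha>0 * \<gamma> ^ q k) - \<beta> k))^2 \<and>
          (\<forall>q'<q k. \<not> (F (P k (\<alpha>0 * \<gamma> ^ q')) \<le> F (\<beta> k) - \<sigma>/2 * (norm (P k (\<alpha>0 * \<gamma> ^ q') - \<beta> k))^2))) \<and>
     (\<forall>k. u k = P k (\<alpha>0 * \<gamma> ^ q k)) \<and>
     (\<forall>k. if switch_cond F \<epsilon> (\<beta> k) (u k) \<and>
             (\<exists>w. newton_sol F (u k) w \<and> F w \<le> F (u k) - \<sigma>/2 * (norm (w - u k))^2)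
          then newton_sol F (u k) (v k) \<and> F (v k) \<le> F (u k) - \<sigma>/2 * (norm (v k - u k))^2
               \<and> \<beta> (Suc k) = v k
          else \<beta> (Suc k) = u k)"

end

theory Submission
  imports Defs
begin

(* Every iteration of GPNA lowers f by at least (sigma/2) ||u^k - beta^k||^2 and f is continuous,
   so u^k - beta^k -> 0 and both sequences converge to beta*. The coordinates in the support of
   beta*_j are eventually nonzero along both sequences; if ||beta*_j||_0 = s_j, sparsity of the
   iterates forces the supports to coincide.

   By the descent lemma every trial step below 1/(K + sigma), K a smoothness constant of f, passes
   the Armijo test, so the accepted step sizes stay away from 0. Passing to the limit in the
   characterisation of sparse projections then shows that the limit is stationary: grad_j f
   vanishes there on the support of beta*_j, and everywhere if ||beta*_j||_0 < s_j. Hence one of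
   (C1)-(C4) eventually holds, and the gradient at u^k restricted to Gamma_k tends to 0. On vectors
   supported in Gamma_k the Hessian dominates l_f ||.||^2, since it differs from the l_f matrix by
   nonnegative curvature terms of the loss. So the Newton system is solvable, its step is at most
   ||(grad f(u^k))_Gamma_k|| / l_f, and since the loss has a bounded third derivative the step
   passes the sufficient decrease test as soon as sigma < l_f. *)

section \<open>The scalar losses\<close>

definition scalar_loss :: "loss_kind \<Rightarrow> real \<Rightarrow> real \<Rightarrow> real" where
  "scalar_loss L yi t = (case L of Lin \<Rightarrow> (yi - t)^2 / 2 | Log \<Rightarrow> ln (1 + exp t) - yi * t)"

definition scalar_loss_d1 :: "loss_kind \<Rightarrow> real \<Rightarrow> real \<Rightarrow> real" where
  "scalar_loss_d1 L yi t = (case L of Lin \<Rightarrow> t - yi | Log \<Rightarrow> exp t / (1 + exp t) - yi)"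

definition scalar_loss_d2 :: "loss_kind \<Rightarrow> real \<Rightarrow> real" where
  "scalar_loss_d2 L t = (case L of Lin \<Rightarrow> 1 | Log \<Rightarrow> exp t / (1 + exp t)^2)"

definition scalar_loss_d3 :: "loss_kind \<Rightarrow> real \<Rightarrow> real" where
  "scalar_loss_d3 L t = (case L of Lin \<Rightarrow> 0 | Log \<Rightarrow> exp t * (1 - exp t) / (1 + exp t)^3)"

lemma one_plus_exp_pos: "0 < 1 + exp (t::real)"
  by (simp add: add_pos_pos)

lemma has_real_derivative_scalar_loss:
  "(scalar_loss L yi has_real_derivative scalar_loss_d1 L yi t) (at t)"
  using one_plus_exp_pos[of t] unfolding scalar_loss_def scalar_loss_d1_def
  by (cases L) (auto intro!: derivative_eq_intros simp: field_simps)

lemma has_real_derivative_scalar_loss_d1: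
  "(scalar_loss_d1 L yi has_real_derivative scalar_loss_d2 L t) (at t)"
  using one_plus_exp_pos[of t] unfolding scalar_loss_d1_def scalar_loss_d2_def
  by (cases L) (auto intro!: derivative_eq_intros simp: field_simps power2_eq_square)

lemma has_real_derivative_scalar_loss_d2:
  "(scalar_loss_d2 L has_real_derivative scalar_loss_d3 L t) (at t)"
proof (cases L)
  case Log
  have pos: "1 + exp t > 0" by (rule one_plus_exp_pos)
  have "(exp t * (1 + exp t)^2 - exp t * (2 * (1 + exp t) * exp t)) * (1 + exp t)^3
      = exp t * (1 - exp t) * ((1 + exp t)^2)^2" by algebra
  then have eq: "(exp t * (1 + exp t)^2 - exp t * (2 * (1 + exp t) * exp t)) / ((1 + exp t)^2)^2
      = exp t * (1 - exp t) / (1 + exp t)^3"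
    using pos by (simp add: frac_eq_eq)
  have "((\<lambda>t. exp t / (1 + exp t)^2) has_real_derivative
      (exp t * (1 + exp t)^2 - exp t * (2 * (1 + exp t) * exp t)) / ((1 + exp t)^2)^2) (at t)"
    using pos by (auto intro!: derivative_eq_intros simp: power2_eq_square)
  then show ?thesis using Log eq unfolding scalar_loss_d2_def scalar_loss_d3_def by simp
qed (simp add: scalar_loss_d2_def[abs_def] scalar_loss_d3_def)

lemma scalar_loss_d2_nonneg: "0 \<le> scalar_loss_d2 L t"
  by (cases L) (auto simp: scalar_loss_d2_def)

lemma scalar_loss_d2_le_1: "scalar_loss_d2 L t \<le> 1"
proof (cases L)
  case Log
  have "exp t \<le> (1 + exp t)^2" by (simp add: power2_eq_square algebra_simps add_pos_pos)
  then show ?thesis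
    using Log one_plus_exp_pos[of t] by (simp add: scalar_loss_d2_def divide_le_eq)
qed (simp add: scalar_loss_d2_def)

lemma abs_scalar_loss_d3_le_1: "\<bar>scalar_loss_d3 L t\<bar> \<le> 1"
proof (cases L)
  case Log
  let ?e = "exp t"
  have "\<bar>1 - ?e\<bar> \<le> 1 + ?e" by (simp add: abs_le_iff)
  then have "\<bar>?e * (1 - ?e)\<bar> \<le> ?e * (1 + ?e)" by (simp add: abs_mult)
  also have "\<dots> \<le> (1 + ?e)^3" by (simp add: power3_eq_cube algebra_simps add_pos_pos)
  finally show ?thesis
    using Log one_plus_exp_pos[of t] by (simp add: scalar_loss_d3_def abs_divide)
qed (simp add: scalar_loss_d3_def)

lemma has_real_derivative_shift:
  "(f has_real_derivative D) (at (t + x)) \<Longrightarrow> ((\<lambda>x. f (t + x)) has_real_derivative D) (at x)"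
  using DERIV_shift[of f D x t] by (simp add: add.commute)

lemma scalar_loss_taylor2_le:
  "scalar_loss L yi (t + h) \<le> scalar_loss L yi t + scalar_loss_d1 L yi t * h + h^2 / 2"
proof -
  define D where "D = (\<lambda>m::nat. if m = 0 then (\<lambda>x. scalar_loss L yi (t + x))
      else if m = 1 then (\<lambda>x. scalar_loss_d1 L yi (t + x)) else (\<lambda>x. scalar_loss_d2 L (t + x)))"
  have "\<forall>m x. m < 2 \<and> \<bar>x\<bar> \<le> \<bar>h\<bar> \<longrightarrow> (D m has_real_derivative D (Suc m) x) (at x)"
    using has_real_derivative_shift[OF has_real_derivative_scalar_loss]
      has_real_derivative_shift[OF has_real_derivative_scalar_loss_d1]
    by (auto simp: D_def less_2_cases_iff)
  from Maclaurin_bi_le[of D _ 2 h, OF _ this]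
  obtain x where "scalar_loss L yi (t + h) = (\<Sum>m<2. D m 0 / fact m * h ^ m) + D 2 x / fact 2 * h ^ 2"
    by (auto simp: D_def)
  then have "scalar_loss L yi (t + h)
      = scalar_loss L yi t + scalar_loss_d1 L yi t * h + scalar_loss_d2 L (t + x) / 2 * h^2"
    by (simp add: D_def eval_nat_numeral)
  moreover have "scalar_loss_d2 L (t + x) / 2 * h^2 \<le> h^2 / 2"
    using scalar_loss_d2_le_1[of L "t + x"] mult_left_le_one_le[of "h^2" "scalar_loss_d2 L (t + x)"]
      scalar_loss_d2_nonneg[of L "t + x"] by simp
  ultimately show ?thesis by linarith
qed

lemma scalar_loss_taylor3_abs_le:
  "\<bar>scalar_loss L yi (t + h) - scalar_loss L yi t - scalar_loss_d1 L yi t * h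
      - scalar_loss_d2 L t * h^2 / 2\<bar> \<le> \<bar>h\<bar>^3"
proof -
  define D where "D = (\<lambda>m::nat. if m = 0 then (\<lambda>x. scalar_loss L yi (t + x))
      else if m = 1 then (\<lambda>x. scalar_loss_d1 L yi (t + x))
      else if m = 2 then (\<lambda>x. scalar_loss_d2 L (t + x)) else (\<lambda>x. scalar_loss_d3 L (t + x)))"
  have "\<forall>m x. m < 3 \<and> \<bar>x\<bar> \<le> \<bar>h\<bar> \<longrightarrow> (D m has_real_derivative D (Suc m) x) (at x)"
    using has_real_derivative_shift[OF has_real_derivative_scalar_loss]
      has_real_derivative_shift[OF has_real_derivative_scalar_loss_d1]
      has_real_derivative_shift[OF has_real_derivative_scalar_loss_d2]
    by (auto simp: D_def numeral_3_eq_3 less_Suc_eq)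
  from Maclaurin_bi_le[of D _ 3 h, OF _ this]
  obtain x where "scalar_loss L yi (t + h) = (\<Sum>m<3. D m 0 / fact m * h ^ m) + D 3 x / fact 3 * h ^ 3"
    by (auto simp: D_def)
  then have "scalar_loss L yi (t + h) - scalar_loss L yi t - scalar_loss_d1 L yi t * h
      - scalar_loss_d2 L t * h^2 / 2 = scalar_loss_d3 L (t + x) / 6 * h^3"
    by (simp add: D_def eval_nat_numeral fact_numeral)
  moreover have "\<bar>scalar_loss_d3 L (t + x) / 6 * h^3\<bar> \<le> \<bar>h\<bar>^3"
  proof -
    have "\<bar>scalar_loss_d3 L (t + x) / 6 * h^3\<bar> = \<bar>scalar_loss_d3 L (t + x)\<bar> / 6 * \<bar>h\<bar>^3"
      by (simp add: abs_mult power_abs)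
    also have "\<dots> \<le> \<bar>h\<bar>^3"
      using abs_scalar_loss_d3_le_1[of L "t + x"] by (intro mult_left_le_one_le) auto
    finally show ?thesis .
  qed
  ultimately show ?thesis by simp
qed

lemma sum_scalar_loss_taylor2_le:
  fixes t h :: "'n::finite \<Rightarrow> real"
  assumes "\<And>i. \<bar>h i\<bar> \<le> B"
  shows "(\<Sum>i\<in>UNIV. scalar_loss L (yv i) (t i + h i) - scalar_loss L (yv i) (t i)
            - scalar_loss_d1 L (yv i) (t i) * h i) \<le> real CARD('n) * (B^2 / 2)"
proof -
  have "(\<Sum>i\<in>UNIV. scalar_loss L (yv i) (t i + h i) - scalar_loss L (yv i) (t i)
            - scalar_loss_d1 L (yv i) (t i) * h i) \<le> (\<Sum>i\<in>(UNIV::'n set). B^2 / 2)"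
  proof (rule sum_mono)
    fix i
    have "(h i)^2 \<le> B^2" using assms[of i] by (metis abs_ge_zero order_trans power2_abs power_mono)
    then show "scalar_loss L (yv i) (t i + h i) - scalar_loss L (yv i) (t i)
            - scalar_loss_d1 L (yv i) (t i) * h i \<le> B^2 / 2"
      using scalar_loss_taylor2_le[of L "yv i" "t i" "h i"] by linarith
  qed
  then show ?thesis by simp
qed

lemma sum_scalar_loss_taylor3_le:
  fixes t h :: "'n::finite \<Rightarrow> real"
  assumes "\<And>i. \<bar>h i\<bar> \<le> B"
  shows "(\<Sum>i\<in>UNIV. scalar_loss L (yv i) (t i + h i) - scalar_loss L (yv i) (t i)
            - scalar_loss_d1 L (yv i) (t i) * h i - scalar_loss_d2 L (t i) * (h i)^2 / 2)
         \<le> real CARD('n) * B^3"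
proof -
  have "(\<Sum>i\<in>UNIV. scalar_loss L (yv i) (t i + h i) - scalar_loss L (yv i) (t i)
            - scalar_loss_d1 L (yv i) (t i) * h i - scalar_loss_d2 L (t i) * (h i)^2 / 2)
        \<le> (\<Sum>i\<in>(UNIV::'n set). B^3)"
  proof (rule sum_mono)
    fix i
    have "\<bar>h i\<bar>^3 \<le> B^3" using assms[of i] by (simp add: power_mono)
    then show "scalar_loss L (yv i) (t i + h i) - scalar_loss L (yv i) (t i)
            - scalar_loss_d1 L (yv i) (t i) * h i - scalar_loss_d2 L (t i) * (h i)^2 / 2 \<le> B^3"
      using scalar_loss_taylor3_abs_le[of L "yv i" "t i" "h i"] by linarith
  qed
  then show ?thesis by simp
qed

section \<open>Gradient and Hessian of the objective\<close>

lemma loss_eq_sum_scalar_loss: "loss L bt A y = (\<Sum>i\<in>UNIV. scalar_loss L (y$i) ((A *v bt)$i))"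
  by (cases L) (simp_all add: loss_def scalar_loss_def sum_divide_distrib)

lemma power2_norm_vec_eq_sum: "(norm (v::real^'n))^2 = (\<Sum>i\<in>UNIV. (v$i)^2)"
  by (simp only: power2_norm_eq_inner) (simp add: inner_vec_def power2_eq_square)

lemma fobj_eq_sum:
  fixes X :: "real^'p1^'n" and Z :: "real^'p2^'n"
  shows "fobj L a b c X Z y x = (1 / real CARD('n)) *
   (a * (\<Sum>i\<in>UNIV. scalar_loss L (y$i) ((X *v fst x)$i))
    + b * (\<Sum>i\<in>UNIV. scalar_loss L (y$i) ((Z *v snd x)$i))
    + (c/2) * (\<Sum>i\<in>UNIV. ((X *v fst x)$i - (Z *v snd x)$i)^2))"
  by (simp add: fobj_def loss_eq_sum_scalar_loss power2_norm_vec_eq_sum)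

definition fobj_grad :: "loss_kind \<Rightarrow> real \<Rightarrow> real \<Rightarrow> real \<Rightarrow> real^'p1^'n \<Rightarrow> real^'p2^'n \<Rightarrow> real^'n
    \<Rightarrow> (real^'p1) \<times> (real^'p2) \<Rightarrow> (real^'p1) \<times> (real^'p2)" where
  "fobj_grad L a b c X Z y x =
    ((1 / real CARD('n)) *\<^sub>R (a *\<^sub>R (\<Sum>i\<in>UNIV. scalar_loss_d1 L (y$i) ((X *v fst x)$i) *\<^sub>R X$i)
         + c *\<^sub>R (\<Sum>i\<in>UNIV. ((X *v fst x)$i - (Z *v snd x)$i) *\<^sub>R X$i)),
     (1 / real CARD('n)) *\<^sub>R (b *\<^sub>R (\<Sum>i\<in>UNIV. scalar_loss_d1 L (y$i) ((Z *v snd x)$i) *\<^sub>R Z$i)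
         - c *\<^sub>R (\<Sum>i\<in>UNIV. ((X *v fst x)$i - (Z *v snd x)$i) *\<^sub>R Z$i)))"

definition fobj_hess :: "loss_kind \<Rightarrow> real \<Rightarrow> real \<Rightarrow> real \<Rightarrow> real^'p1^'n \<Rightarrow> real^'p2^'n
    \<Rightarrow> (real^'p1) \<times> (real^'p2) \<Rightarrow> (real^'p1) \<times> (real^'p2) \<Rightarrow> (real^'p1) \<times> (real^'p2)" where
  "fobj_hess L a b c X Z x h =
    ((1 / real CARD('n)) *\<^sub>R
        (a *\<^sub>R (\<Sum>i\<in>UNIV. ((X *v fst h)$i * scalar_loss_d2 L ((X *v fst x)$i)) *\<^sub>R X$i)
         + c *\<^sub>R (\<Sum>i\<in>UNIV. ((X *v fst h)$i - (Z *v snd h)$i) *\<^sub>R X$i)),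
     (1 / real CARD('n)) *\<^sub>R
        (b *\<^sub>R (\<Sum>i\<in>UNIV. ((Z *v snd h)$i * scalar_loss_d2 L ((Z *v snd x)$i)) *\<^sub>R Z$i)
         - c *\<^sub>R (\<Sum>i\<in>UNIV. ((X *v fst h)$i - (Z *v snd h)$i) *\<^sub>R Z$i)))"

lemma has_derivative_mv_fst_nth:
  fixes A :: "real^'p^'n"
  shows "((\<lambda>x::(real^'p) \<times> ('a::real_normed_vector). (A *v fst x) $ i)
           has_derivative (\<lambda>h. (A *v fst h) $ i)) F"
  unfolding matrix_vector_mul_component
  by (intro bounded_linear_imp_has_derivative bounded_linear_inner_right_comp bounded_linear_fst)

lemma has_derivative_mv_snd_nth:
  fixes A :: "real^'p^'n"
  shows "((\<lambda>x::('a::real_normed_vector) \<times> (real^'p). (A *v snd x) $ i)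
           has_derivative (\<lambda>h. (A *v snd h) $ i)) F"
  unfolding matrix_vector_mul_component
  by (intro bounded_linear_imp_has_derivative bounded_linear_inner_right_comp bounded_linear_snd)

lemma inner_fobj_grad:
  fixes X :: "real^'p1^'n" and Z :: "real^'p2^'n"
  shows "fobj_grad L a b c X Z y x \<bullet> h = (1 / real CARD('n)) *
   (a * (\<Sum>i\<in>UNIV. (X *v fst h)$i * scalar_loss_d1 L (y$i) ((X *v fst x)$i))
    + b * (\<Sum>i\<in>UNIV. (Z *v snd h)$i * scalar_loss_d1 L (y$i) ((Z *v snd x)$i))
    + c * (\<Sum>i\<in>UNIV. ((X *v fst h)$i - (Z *v snd h)$i) * ((X *v fst x)$i - (Z *v snd x)$i)))"
  by (simp add: fobj_grad_def inner_prod_def inner_sum_left inner_diff_left matrix_vector_mul_component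
      sum_distrib_left algebra_simps sum.distrib sum_subtractf)

lemma inner_fobj_hess:
  fixes X :: "real^'p1^'n" and Z :: "real^'p2^'n"
  shows "h \<bullet> fobj_hess L a b c X Z x h = (1 / real CARD('n)) *
     (a * (\<Sum>i\<in>UNIV. scalar_loss_d2 L ((X *v fst x)$i) * ((X *v fst h)$i)^2)
    + b * (\<Sum>i\<in>UNIV. scalar_loss_d2 L ((Z *v snd x)$i) * ((Z *v snd h)$i)^2)
    + c * (\<Sum>i\<in>UNIV. ((X *v fst h)$i - (Z *v snd h)$i)^2))"
  by (simp add: fobj_hess_def inner_prod_def inner_sum_right inner_diff_right
      matrix_vector_mul_component inner_commute[of _ "fst h"] inner_commute[of _ "snd h"]
      sum_distrib_left algebra_simps sum.distrib sum_subtractf power2_eq_square)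

lemma has_derivative_fobj:
  fixes X :: "real^'p1^'n" and Z :: "real^'p2^'n"
  shows "(fobj L a b c X Z y has_derivative (\<lambda>h. fobj_grad L a b c X Z y x \<bullet> h)) (at x)"
proof -
  have "((\<lambda>x. (1 / real CARD('n)) *
     (a * (\<Sum>i\<in>UNIV. scalar_loss L (y$i) ((X *v fst x)$i))
      + b * (\<Sum>i\<in>UNIV. scalar_loss L (y$i) ((Z *v snd x)$i))
      + (c/2) * (\<Sum>i\<in>UNIV. ((X *v fst x)$i - (Z *v snd x)$i)^2))) has_derivative
    (\<lambda>h. (1 / real CARD('n)) *
     (a * (\<Sum>i\<in>UNIV. (X *v fst h)$i * scalar_loss_d1 L (y$i) ((X *v fst x)$i))
      + b * (\<Sum>i\<in>UNIV. (Z *v snd h)$i * scalar_loss_d1 L (y$i) ((Z *v snd x)$i))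
      + (c/2) * (\<Sum>i\<in>UNIV. 2 * (((X *v fst h)$i - (Z *v snd h)$i)
                                   * ((X *v fst x)$i - (Z *v snd x)$i)))))) (at x)"
    by (auto intro!: derivative_eq_intros DERIV_compose_FDERIV[OF has_real_derivative_scalar_loss]
        has_derivative_mv_fst_nth has_derivative_mv_snd_nth simp: power2_eq_square)
  then show ?thesis
    unfolding fobj_eq_sum[abs_def] inner_fobj_grad by (simp add: sum_distrib_left)
qed

lemma has_derivative_fobj_grad:
  fixes X :: "real^'p1^'n" and Z :: "real^'p2^'n"
  shows "(fobj_grad L a b c X Z y has_derivative fobj_hess L a b c X Z x) (at x)"
  unfolding fobj_grad_def[abs_def] fobj_hess_def[abs_def]
  by (auto intro!: derivative_eq_intros DERIV_compose_FDERIV[OF has_real_derivative_scalar_loss_d1]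
      has_derivative_mv_fst_nth has_derivative_mv_snd_nth)

lemma gradient_eqI:
  fixes F :: "'a::real_inner \<Rightarrow> real"
  assumes "(F has_derivative (\<lambda>h. g \<bullet> h)) (at x)"
  shows "gradient F x = g"
  unfolding gradient_def
proof (rule the_equality)
  fix g' assume "(F has_derivative (\<lambda>h. g' \<bullet> h)) (at x)"
  from has_derivative_unique[OF this assms] have "(g' - g) \<bullet> (g' - g) = 0"
    by (metis (no_types) inner_diff_left right_minus_eq)
  then show "g' = g" by simp
qed (rule assms)

lemma hessian_eqI: "(gradient F has_derivative H) (at x) \<Longrightarrow> hessian F x = H"
  unfolding hessian_def using has_derivative_unique by blast

lemma gradient_fobj:
  fixes X :: "real^'p1^'n" and Z :: "real^'p2^'n"
  shows "gradient (fobj L a b c X Z y) = fobj_grad L a b c X Z y"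
  by (rule ext, rule gradient_eqI[OF has_derivative_fobj])

lemma hessian_fobj:
  fixes X :: "real^'p1^'n" and Z :: "real^'p2^'n"
  shows "hessian (fobj L a b c X Z y) x = fobj_hess L a b c X Z x"
  by (rule hessian_eqI) (simp add: gradient_fobj has_derivative_fobj_grad)

definition row_norm_sum :: "real^'p1^'n \<Rightarrow> real^'p2^'n \<Rightarrow> real" where
  "row_norm_sum X Z = (\<Sum>i\<in>UNIV. norm (X$i)) + (\<Sum>i\<in>UNIV. norm (Z$i)) + 1"

lemma row_norm_sum_pos: "0 < row_norm_sum X Z"
  unfolding row_norm_sum_def by (simp add: add_nonneg_pos sum_nonneg)

lemma abs_mv_nth_le: "\<bar>(A *v x)$i\<bar> \<le> (\<Sum>r\<in>UNIV. norm (A$r)) * norm x"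
proof -
  have "\<bar>(A *v x)$i\<bar> \<le> norm (A$i) * norm x"
    unfolding matrix_vector_mul_component by (rule Cauchy_Schwarz_ineq2)
  also have "\<dots> \<le> (\<Sum>r\<in>UNIV. norm (A$r)) * norm x"
    by (intro mult_right_mono member_le_sum) auto
  finally show ?thesis .
qed

lemma abs_mv_fst_le: "\<bar>(X *v fst h)$i\<bar> \<le> row_norm_sum X Z * norm h"
proof -
  have "(\<Sum>r\<in>UNIV. norm (X$r)) * norm (fst h) \<le> row_norm_sum X Z * norm h"
    unfolding row_norm_sum_def
    by (intro mult_mono add_increasing2 add_nonneg_nonneg sum_nonneg)
       (auto simp: norm_fst_le[of "fst h" "snd h", simplified])
  with abs_mv_nth_le show ?thesis by (rule order_trans)
qed

lemma abs_mv_snd_le: "\<bar>(Z *v snd h)$i\<bar> \<le> row_norm_sum X Z * norm h"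
proof -
  have "(\<Sum>r\<in>UNIV. norm (Z$r)) * norm (snd h) \<le> row_norm_sum X Z * norm h"
    unfolding row_norm_sum_def
    by (intro mult_mono add_increasing2 add_increasing sum_nonneg)
       (auto simp: norm_snd_le[of "snd h" "fst h", simplified])
  with abs_mv_nth_le show ?thesis by (rule order_trans)
qed

lemma fobj_add_minus_linear:
  fixes X :: "real^'p1^'n" and Z :: "real^'p2^'n"
  shows "fobj L a b c X Z y (x + h) - fobj L a b c X Z y x - fobj_grad L a b c X Z y x \<bullet> h =
   (1 / real CARD('n)) *
   (a * (\<Sum>i\<in>UNIV. scalar_loss L (y$i) ((X *v fst x)$i + (X *v fst h)$i)
          - scalar_loss L (y$i) ((X *v fst x)$i) - scalar_loss_d1 L (y$i) ((X *v fst x)$i) * (X *v fst h)$i)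
  + b * (\<Sum>i\<in>UNIV. scalar_loss L (y$i) ((Z *v snd x)$i + (Z *v snd h)$i)
          - scalar_loss L (y$i) ((Z *v snd x)$i) - scalar_loss_d1 L (y$i) ((Z *v snd x)$i) * (Z *v snd h)$i)
  + c/2 * (\<Sum>i\<in>UNIV. ((X *v fst h)$i - (Z *v snd h)$i)^2))"
  by (simp add: fobj_eq_sum inner_fobj_grad matrix_vector_right_distrib sum_subtractf sum.distrib
      algebra_simps power2_eq_square sum_distrib_left sum_divide_distrib diff_divide_distrib
      add_divide_distrib)

definition fobj_smoothness :: "real \<Rightarrow> real \<Rightarrow> real \<Rightarrow> real^'p1^'n \<Rightarrow> real^'p2^'n \<Rightarrow> real" where
  "fobj_smoothness a b c X Z = (a + b + 4*c) * (row_norm_sum X Z)^2"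

lemma fobj_le_first_order:
  fixes X :: "real^'p1^'n" and Z :: "real^'p2^'n"
  assumes "0 \<le> a" "0 \<le> b" "0 \<le> c"
  shows "fobj L a b c X Z y (x + h) \<le> fobj L a b c X Z y x + fobj_grad L a b c X Z y x \<bullet> h
          + fobj_smoothness a b c X Z / 2 * (norm h)^2"
proof -
  let ?N = "real CARD('n)" and ?B = "row_norm_sum X Z * norm h"
  have coupling: "(\<Sum>i\<in>UNIV. ((X *v fst h)$i - (Z *v snd h)$i)^2) \<le> ?N * (2 * ?B)^2"
  proof -
    have "(\<Sum>i\<in>UNIV. ((X *v fst h)$i - (Z *v snd h)$i)^2) \<le> (\<Sum>i\<in>(UNIV::'n set). (2 * ?B)^2)"
    proof (rule sum_mono)
      fix i
      have "\<bar>(X *v fst h)$i - (Z *v snd h)$i\<bar> \<le> 2 * ?B"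
        using abs_mv_fst_le[of X h i Z] abs_mv_snd_le[of Z h i X] by linarith
      then show "((X *v fst h)$i - (Z *v snd h)$i)^2 \<le> (2 * ?B)^2"
        by (metis abs_ge_zero order_trans power2_abs power_mono)
    qed
    then show ?thesis by simp
  qed
  have "fobj L a b c X Z y (x + h) - fobj L a b c X Z y x - fobj_grad L a b c X Z y x \<bullet> h
      \<le> (1 / ?N) * (a * (?N * (?B^2 / 2)) + b * (?N * (?B^2 / 2)) + c/2 * (?N * (2 * ?B)^2))"
    unfolding fobj_add_minus_linear using assms coupling
    by (intro mult_left_mono add_mono sum_scalar_loss_taylor2_le abs_mv_fst_le abs_mv_snd_le) auto
  also have "\<dots> = fobj_smoothness a b c X Z / 2 * (norm h)^2"
    by (simp add: fobj_smoothness_def algebra_simps power2_eq_square)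
  finally show ?thesis by linarith
qed

lemma fobj_le_second_order:
  fixes X :: "real^'p1^'n" and Z :: "real^'p2^'n"
  assumes "0 \<le> a" "0 \<le> b"
  shows "fobj L a b c X Z y (x + h) \<le> fobj L a b c X Z y x + fobj_grad L a b c X Z y x \<bullet> h
          + (1/2) * (h \<bullet> fobj_hess L a b c X Z x h) + (a + b) * (row_norm_sum X Z)^3 * (norm h)^3"
proof -
  let ?N = "real CARD('n)" and ?B = "row_norm_sum X Z * norm h"
  have "fobj L a b c X Z y (x + h) - fobj L a b c X Z y x - fobj_grad L a b c X Z y x \<bullet> h
          - (1/2) * (h \<bullet> fobj_hess L a b c X Z x h) = (1/?N) *
     (a * (\<Sum>i\<in>UNIV. scalar_loss L (y$i) ((X *v fst x)$i + (X *v fst h)$i)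
          - scalar_loss L (y$i) ((X *v fst x)$i) - scalar_loss_d1 L (y$i) ((X *v fst x)$i) * (X *v fst h)$i
          - scalar_loss_d2 L ((X *v fst x)$i) * ((X *v fst h)$i)^2 / 2)
    + b * (\<Sum>i\<in>UNIV. scalar_loss L (y$i) ((Z *v snd x)$i + (Z *v snd h)$i)
          - scalar_loss L (y$i) ((Z *v snd x)$i) - scalar_loss_d1 L (y$i) ((Z *v snd x)$i) * (Z *v snd h)$i
          - scalar_loss_d2 L ((Z *v snd x)$i) * ((Z *v snd h)$i)^2 / 2))"
    unfolding diff_diff_eq2[symmetric] fobj_add_minus_linear inner_fobj_hess
    by (simp add: sum_subtractf algebra_simps sum_divide_distrib diff_divide_distrib
        add_divide_distrib sum.distrib)
       (simp add: sum_divide_distrib[symmetric])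
  also have "\<dots> \<le> (1/?N) * (a * (?N * ?B^3) + b * (?N * ?B^3))"
    using assms
    by (intro mult_left_mono add_mono sum_scalar_loss_taylor3_le abs_mv_fst_le abs_mv_snd_le) auto
  also have "\<dots> = (a + b) * (row_norm_sum X Z)^3 * (norm h)^3"
    by (simp add: algebra_simps power_mult_distrib)
  finally show ?thesis by linarith
qed

section \<open>Least eigenvalues of principal submatrices\<close>

definition quad_form :: "('k \<Rightarrow> 'k \<Rightarrow> real) \<Rightarrow> 'k set \<Rightarrow> ('k \<Rightarrow> real) \<Rightarrow> real" where
  "quad_form M T z = (\<Sum>s\<in>T. \<Sum>t\<in>T. M s t * z s * z t)"

definition sym_matrix :: "('k \<Rightarrow> 'k \<Rightarrow> real) \<Rightarrow> bool" where
  "sym_matrix M \<longleftrightarrow> (\<forall>s t. M s t = M t s)"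

lemma quad_form_add_scaled:
  assumes "sym_matrix M"
  shows "quad_form M T (\<lambda>t. x t + \<tau> * w t) = quad_form M T x
           + 2 * \<tau> * (\<Sum>s\<in>T. w s * (\<Sum>t\<in>T. M s t * x t)) + \<tau>^2 * quad_form M T w"
proof -
  have swap: "(\<Sum>s\<in>T. \<Sum>t\<in>T. M s t * x s * w t) = (\<Sum>s\<in>T. \<Sum>t\<in>T. M s t * w s * x t)"
    by (subst sum.swap) (use assms in \<open>simp add: sym_matrix_def algebra_simps\<close>)
  have "quad_form M T (\<lambda>t. x t + \<tau> * w t) = quad_form M T x
      + \<tau> * (\<Sum>s\<in>T. \<Sum>t\<in>T. M s t * x s * w t) + \<tau> * (\<Sum>s\<in>T. \<Sum>t\<in>T. M s t * w s * x t)
      + \<tau>^2 * quad_form M T w"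
    unfolding quad_form_def by (simp add: algebra_simps sum.distrib sum_distrib_left power2_eq_square)
  also have "\<dots> = quad_form M T x + 2 * \<tau> * (\<Sum>s\<in>T. w s * (\<Sum>t\<in>T. M s t * x t))
      + \<tau>^2 * quad_form M T w"
    unfolding swap by (simp add: algebra_simps sum_distrib_left)
  finally show ?thesis .
qed

lemma linear_plus_quadratic_nonneg_imp_zero:
  fixes B C :: real
  assumes "0 \<le> B" and nonneg: "\<And>\<tau>. 0 \<le> 2 * \<tau> * C + \<tau>^2 * B"
  shows "C = 0"
proof (rule ccontr)
  assume "C \<noteq> 0"
  define e where "e = 1 / (B + 1)"
  have "e > 0" "e * B < 1" using assms(1) by (auto simp: e_def field_simps)
  have "2 * (- e * C) * C + (- e * C)^2 * B = e * C^2 * (e * B - 2)"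
    by (simp add: algebra_simps power2_eq_square)
  also have "\<dots> < 0" using \<open>e > 0\<close> \<open>e * B < 1\<close> \<open>C \<noteq> 0\<close> by (intro mult_pos_neg) auto
  finally show False using nonneg[of "- e * C"] by linarith
qed

lemma sum_sq_eq_power2_norm_supported:
  fixes x :: "real^'k"
  assumes "\<forall>t. t \<notin> T \<longrightarrow> x$t = 0"
  shows "(\<Sum>t\<in>T. (x$t)^2) = (norm x)^2"
  unfolding power2_norm_vec_eq_sum using assms by (intro sum.mono_neutral_left) auto

lemma compact_supported_unit_sphere:
  "compact {x::real^'k. (\<forall>t. t \<notin> T \<longrightarrow> x$t = 0) \<and> norm x = 1}" (is "compact ?S")
proof (subst compact_eq_bounded_closed, intro conjI)
  have "?S = (\<Inter>t\<in>-T. {x::real^'k. x$t = 0}) \<inter> {x. norm x = 1}" by auto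
  moreover have "closed ((\<Inter>t\<in>-T. {x::real^'k. x$t = 0}) \<inter> {x. norm x = 1})"
    by (intro closed_Int closed_INT ballI closed_Collect_eq continuous_intros)
  ultimately show "closed ?S" by simp
  show "bounded ?S" unfolding bounded_iff by (intro exI[of _ 1]) auto
qed

lemma quad_form_attains_min_on_sphere:
  fixes M :: "'k::finite \<Rightarrow> 'k \<Rightarrow> real"
  assumes "T \<noteq> {}"
  obtains x0 where "\<forall>t. t \<notin> T \<longrightarrow> x0 t = 0" "(\<Sum>t\<in>T. (x0 t)^2) = 1"
    "\<And>z. quad_form M T x0 * (\<Sum>t\<in>T. (z t)^2) \<le> quad_form M T z"
proof -
  define S where "S = {x::real^'k. (\<forall>t. t \<notin> T \<longrightarrow> x$t = 0) \<and> norm x = 1}"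
  obtain t0 where "t0 \<in> T" using assms by auto
  then have "\<forall>t. t \<notin> T \<longrightarrow> axis t0 (1::real) $ t = 0" by (auto simp: axis_def)
  then have "axis t0 1 \<in> S" unfolding S_def by simp
  then have nonempty: "S \<noteq> {}" by auto
  have cont: "continuous_on S (\<lambda>x::real^'k. quad_form M T (\<lambda>t. x$t))"
    unfolding quad_form_def by (intro continuous_intros)
  obtain x0 where x0: "x0 \<in> S"
    and min: "\<And>x. x \<in> S \<Longrightarrow> quad_form M T (\<lambda>t. x0$t) \<le> quad_form M T (\<lambda>t. x$t)"
    using continuous_attains_inf[OF compact_supported_unit_sphere[of T, folded S_def] nonempty cont]
    by blast
  have "quad_form M T (\<lambda>t. x0$t) * (\<Sum>t\<in>T. (z t)^2) \<le> quad_form M T z" for z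
  proof (cases "(\<Sum>t\<in>T. (z t)^2) = 0")
    case True
    then have "\<forall>t\<in>T. z t = 0" by (simp add: sum_nonneg_eq_0_iff)
    then show ?thesis using True by (simp add: quad_form_def)
  next
    case False
    define r where "r = sqrt (\<Sum>t\<in>T. (z t)^2)"
    have r: "r > 0" "r^2 = (\<Sum>t\<in>T. (z t)^2)"
      using False sum_nonneg[of T "\<lambda>t. (z t)^2"] unfolding r_def by auto
    define x where "x = (\<chi> t. if t \<in> T then z t / r else 0)"
    have x_off: "\<forall>t. t \<notin> T \<longrightarrow> x$t = 0" by (simp add: x_def)
    have "(norm x)^2 = (\<Sum>t\<in>T. (x$t)^2)" using sum_sq_eq_power2_norm_supported[OF x_off] by simp
    also have "\<dots> = (\<Sum>t\<in>T. (z t)^2) / r^2" by (simp add: x_def power_divide sum_divide_distrib)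
    also have "\<dots> = 1" using r False by simp
    finally have "norm x = 1" using norm_ge_zero[of x] by (auto simp: power2_eq_1_iff)
    then have "quad_form M T (\<lambda>t. x0$t) \<le> quad_form M T (\<lambda>t. x$t)"
      using min x_off unfolding S_def by simp
    also have "\<dots> = quad_form M T z / r^2"
      unfolding quad_form_def x_def by (simp add: sum_divide_distrib power2_eq_square)
    finally show ?thesis using r(1) unfolding r(2)[symmetric] by (simp add: pos_le_divide_eq)
  qed
  moreover have "(\<Sum>t\<in>T. (x0$t)^2) = 1"
    using x0 sum_sq_eq_power2_norm_supported[of T x0] unfolding S_def by simp
  ultimately show ?thesis using that[of "\<lambda>t. x0$t"] x0 unfolding S_def by simp
qed

text \<open>First-order optimality: perturbing the minimiser \<open>x0\<close> of the Rayleigh quotient along the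
  residual \<open>g = M x0 - \<mu> x0\<close> gives \<open>0 \<le> 2\<tau>\<parallel>g\<parallel>\<^sup>2 + O(\<tau>\<^sup>2)\<close> for all \<open>\<tau>\<close>, so \<open>g = 0\<close>.\<close>

lemma quad_form_minimiser_eig_sub:
  fixes M :: "'k::finite \<Rightarrow> 'k \<Rightarrow> real"
  assumes sym: "sym_matrix M" and off: "\<forall>t. t \<notin> T \<longrightarrow> x0 t = 0"
    and unit: "(\<Sum>t\<in>T. (x0 t)^2) = 1"
    and min: "\<And>z. quad_form M T x0 * (\<Sum>t\<in>T. (z t)^2) \<le> quad_form M T z"
  shows "eig_sub M T (quad_form M T x0)"
proof -
  define \<mu> where "\<mu> = quad_form M T x0"
  define g where "g = (\<lambda>s. (\<Sum>t\<in>T. M s t * x0 t) - \<mu> * x0 s)"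
  have B: "0 \<le> quad_form M T g - \<mu> * (\<Sum>t\<in>T. (g t)^2)" using min[of g] unfolding \<mu>_def by simp
  have "0 \<le> 2 * \<tau> * (\<Sum>s\<in>T. (g s)^2) + \<tau>^2 * (quad_form M T g - \<mu> * (\<Sum>t\<in>T. (g t)^2))" for \<tau>
  proof -
    have "0 \<le> quad_form M T (\<lambda>t. x0 t + \<tau> * g t) - \<mu> * (\<Sum>t\<in>T. (x0 t + \<tau> * g t)^2)"
      using min[of "\<lambda>t. x0 t + \<tau> * g t"] unfolding \<mu>_def by simp
    also have "\<dots> = \<mu> + 2 * \<tau> * (\<Sum>s\<in>T. g s * (\<Sum>t\<in>T. M s t * x0 t)) + \<tau>^2 * quad_form M T g
        - \<mu> * ((\<Sum>t\<in>T. (x0 t)^2) + 2 * \<tau> * (\<Sum>t\<in>T. g t * x0 t) + \<tau>^2 * (\<Sum>t\<in>T. (g t)^2))"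
      unfolding quad_form_add_scaled[OF sym] \<mu>_def
      by (simp add: power2_eq_square algebra_simps sum.distrib sum_distrib_left)
    also have "\<dots> = 2 * \<tau> * (\<Sum>s\<in>T. (g s)^2) + \<tau>^2 * (quad_form M T g - \<mu> * (\<Sum>t\<in>T. (g t)^2))"
      unfolding unit
      by (simp add: g_def power2_eq_square algebra_simps sum_subtractf sum_distrib_left sum.distrib)
    finally show ?thesis .
  qed
  then have "(\<Sum>s\<in>T. (g s)^2) = 0"
    using linear_plus_quadratic_nonneg_imp_zero[OF B] by (simp add: mult.commute)
  then have "\<forall>s\<in>T. g s = 0" by (simp add: sum_nonneg_eq_0_iff)
  have "\<exists>i\<in>T. x0 i \<noteq> 0"
  proof (rule ccontr)
    assume "\<not> ?thesis"
    then have "(\<Sum>t\<in>T. (x0 t)^2) = 0" by simp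
    with unit show False by simp
  qed
  moreover have "\<forall>i\<in>T. (\<Sum>j\<in>T. M i j * x0 j) = \<mu> * x0 i"
    using \<open>\<forall>s\<in>T. g s = 0\<close> unfolding g_def by simp
  ultimately show ?thesis using off unfolding eig_sub_def \<mu>_def by blast
qed

lemma eig_sub_vectors_orthogonal:
  fixes M :: "'k::finite \<Rightarrow> 'k \<Rightarrow> real"
  assumes sym: "sym_matrix M"
    and x: "\<forall>i. i \<notin> T \<longrightarrow> x i = 0" "\<forall>i\<in>T. (\<Sum>j\<in>T. M i j * x j) = lam * x i"
    and z: "\<forall>i. i \<notin> T \<longrightarrow> z i = 0" "\<forall>i\<in>T. (\<Sum>j\<in>T. M i j * z j) = mu * z i"
    and "lam \<noteq> mu"
  shows "vec_lambda x \<bullet> vec_lambda z = 0"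
proof -
  have "lam * (\<Sum>i\<in>T. x i * z i) = (\<Sum>i\<in>T. (\<Sum>j\<in>T. M i j * x j) * z i)"
    using x(2) by (simp add: sum_distrib_left algebra_simps)
  also have "\<dots> = (\<Sum>j\<in>T. x j * (\<Sum>i\<in>T. M j i * z i))"
    by (simp add: sum_distrib_left sum_distrib_right, subst sum.swap)
       (use sym in \<open>simp add: sym_matrix_def algebra_simps\<close>)
  also have "\<dots> = mu * (\<Sum>i\<in>T. x i * z i)" using z(2) by (simp add: sum_distrib_left algebra_simps)
  finally have "(\<Sum>i\<in>T. x i * z i) = 0" using \<open>lam \<noteq> mu\<close> by (simp add: algebra_simps)
  moreover have "vec_lambda x \<bullet> vec_lambda z = (\<Sum>i\<in>T. x i * z i)"
    unfolding inner_vec_def using x(1) by (simp, intro sum.mono_neutral_right) auto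
  ultimately show ?thesis by simp
qed

text \<open>Eigenvectors for distinct eigenvalues are orthogonal, so there are finitely many
  eigenvalues; otherwise the \<open>Min\<close> in \<open>min_sub_eig\<close> would be unspecified.\<close>

lemma finite_eig_sub:
  fixes M :: "'k::finite \<Rightarrow> 'k \<Rightarrow> real"
  assumes sym: "sym_matrix M"
  shows "finite {lam. eig_sub M T lam}"
proof -
  define E where "E = {lam. eig_sub M T lam}"
  define V where "V = (\<lambda>lam. vec_lambda (SOME x. (\<exists>i\<in>T. x i \<noteq> 0) \<and> (\<forall>i. i \<notin> T \<longrightarrow> x i = 0) \<and>
      (\<forall>i\<in>T. (\<Sum>j\<in>T. M i j * x j) = lam * x i)) :: real^'k)"
  have V: "V lam \<noteq> 0 \<and> (\<forall>i. i \<notin> T \<longrightarrow> V lam $ i = 0) \<and> (\<forall>i\<in>T. (\<Sum>j\<in>T. M i j * V lam $ j) = lam * V lam $ i)"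
    if "lam \<in> E" for lam
    using someI_ex[OF that[unfolded E_def mem_Collect_eq eig_sub_def]]
    unfolding V_def by (auto simp: vec_eq_iff)
  have orth: "V lam \<bullet> V mu = 0" if "lam \<in> E" "mu \<in> E" "lam \<noteq> mu" for lam mu
    using eig_sub_vectors_orthogonal[OF sym _ _ _ _ that(3), where T = T and x = "\<lambda>i. V lam $ i" and z = "\<lambda>i. V mu $ i"]
      V[OF that(1)] V[OF that(2)] by simp
  have "inj_on V E"
  proof (rule inj_onI, rule ccontr)
    fix lam mu assume "lam \<in> E" "mu \<in> E" "V lam = V mu" "lam \<noteq> mu"
    then have "V lam \<bullet> V lam = 0" using orth[of lam mu] by simp
    then show False using V[OF \<open>lam \<in> E\<close>] by simp
  qed
  moreover have "independent (V ` E)"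
  proof (rule pairwise_orthogonal_independent)
    show "pairwise orthogonal (V ` E)"
      unfolding pairwise_def orthogonal_def using orth by blast
    show "0 \<notin> V ` E" using V by fastforce
  qed
  then have "finite (V ` E)" using independent_bound by blast
  ultimately show ?thesis unfolding E_def[symmetric] using finite_imageD by blast
qed

lemma min_sub_eig_le:
  fixes M :: "'k::finite \<Rightarrow> 'k \<Rightarrow> real"
  assumes "sym_matrix M" "card T \<le> s" "eig_sub M T lam"
  shows "min_sub_eig s M \<le> lam"
proof -
  have "{lam. \<exists>T. card T \<le> s \<and> eig_sub M T lam} \<subseteq> (\<Union>T. {lam. eig_sub M T lam})" by auto
  moreover have "finite (\<Union>T. {lam. eig_sub M T lam})" using finite_eig_sub[OF assms(1)] by simp
  ultimately show ?thesis
    unfolding min_sub_eig_def using assms(2,3) by (intro Min_le) (auto intro: finite_subset)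
qed

lemma quad_form_ge_min_sub_eig:
  fixes M :: "'k::finite \<Rightarrow> 'k \<Rightarrow> real"
  assumes sym: "sym_matrix M" and "card T \<le> s"
  shows "min_sub_eig s M * (\<Sum>t\<in>T. (z t)^2) \<le> quad_form M T z"
proof (cases "T = {}")
  case False
  then obtain x0 where x0: "\<forall>t. t \<notin> T \<longrightarrow> x0 t = 0" "(\<Sum>t\<in>T. (x0 t)^2) = 1"
    and min: "\<And>z. quad_form M T x0 * (\<Sum>t\<in>T. (z t)^2) \<le> quad_form M T z"
    using quad_form_attains_min_on_sphere[where M = M] by blast
  have "min_sub_eig s M \<le> quad_form M T x0"
    using min_sub_eig_le[OF sym assms(2) quad_form_minimiser_eig_sub[OF sym x0 min]] .
  then have "min_sub_eig s M * (\<Sum>t\<in>T. (z t)^2) \<le> quad_form M T x0 * (\<Sum>t\<in>T. (z t)^2)"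
    by (intro mult_right_mono sum_nonneg) auto
  with min[of z] show ?thesis by linarith
qed (simp add: quad_form_def)

section \<open>The Hessian on sparse directions\<close>

lemma sum_UNIV_Plus:
  fixes f :: "'a::finite + 'b::finite \<Rightarrow> 'c::comm_monoid_add"
  shows "(\<Sum>t\<in>UNIV. f t) = (\<Sum>i\<in>UNIV. f (Inl i)) + (\<Sum>j\<in>UNIV. f (Inr j))"
  by (subst UNIV_Plus_UNIV[symmetric], subst sum.Plus) (auto simp: o_def)

lemma power2_norm_prod: "(norm h)^2 = (norm (fst h))^2 + (norm (snd h))^2"
  by (cases h) (simp add: norm_Pair)

lemma power2_norm_eq_sum_comp: "(norm h)^2 = (\<Sum>t\<in>UNIV. (comp h t)^2)"
  by (simp add: power2_norm_prod power2_norm_vec_eq_sum sum_UNIV_Plus)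

lemma inner_eq_sum_comp: "g \<bullet> h = (\<Sum>t\<in>UNIV. comp g t * comp h t)"
  by (simp add: inner_prod_def inner_vec_def sum_UNIV_Plus)

lemma sum_gram_eq:
  fixes A :: "real^'p^'n" and B :: "real^'q^'n"
  shows "(\<Sum>i\<in>UNIV. \<Sum>j\<in>UNIV. k * gram A B i j * u$i * w$j) = k * (\<Sum>r\<in>UNIV. (A *v u)$r * (B *v w)$r)"
proof -
  have "(\<Sum>i\<in>UNIV. \<Sum>j\<in>UNIV. k * gram A B i j * u$i * w$j)
      = (\<Sum>i\<in>UNIV. \<Sum>j\<in>UNIV. \<Sum>r\<in>UNIV. k * (A$r$i * u$i) * (B$r$j * w$j))"
    unfolding gram_def by (simp add: sum_distrib_left sum_distrib_right algebra_simps)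
  also have "\<dots> = (\<Sum>r\<in>UNIV. \<Sum>i\<in>UNIV. \<Sum>j\<in>UNIV. k * (A$r$i * u$i) * (B$r$j * w$j))"
    by (subst sum.swap, rule sum.cong[OF refl], rule sum.swap)
  also have "\<dots> = k * (\<Sum>r\<in>UNIV. (\<Sum>i\<in>UNIV. A$r$i * u$i) * (\<Sum>j\<in>UNIV. B$r$j * w$j))"
  proof -
    have "k * ((\<Sum>i\<in>UNIV. A$r$i * u$i) * (\<Sum>j\<in>UNIV. B$r$j * w$j))
        = (\<Sum>i\<in>UNIV. \<Sum>j\<in>UNIV. k * (A$r$i * u$i) * (B$r$j * w$j))" for r
      by (subst sum_product) (simp add: sum_distrib_left mult.assoc)
    then show ?thesis by (simp add: sum_distrib_left)
  qed
  also have "\<dots> = k * (\<Sum>r\<in>UNIV. (A *v u)$r * (B *v w)$r)"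
    by (simp add: matrix_vector_mult_def)
  finally show ?thesis .
qed

lemma sym_lf_matrix: "sym_matrix (lf_matrix L a b c X Z)"
proof -
  have g: "\<And>A B i j. gram A B i j = gram B A j i" by (simp add: gram_def mult.commute)
  show ?thesis unfolding sym_matrix_def
  proof (intro allI)
    fix s t :: "'a + 'b"
    show "lf_matrix L a b c X Z s t = lf_matrix L a b c X Z t s"
      by (cases L; cases s; cases t) (auto simp: lf_matrix_def Let_def g[of X X] g[of Z Z] g[of X Z])
  qed
qed

text \<open>The weight times the infimum of the curvature of the scalar loss: the \<open>l_f\<close> matrix is the
  Hessian with the loss curvature replaced by this lower bound.\<close>

definition lin_weight :: "loss_kind \<Rightarrow> real \<Rightarrow> real" where
  "lin_weight L w = (case L of Lin \<Rightarrow> w | Log \<Rightarrow> 0)"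

lemma quad_form_lf_matrix:
  fixes X :: "real^'p1^'n" and Z :: "real^'p2^'n"
  shows "quad_form (lf_matrix L a b c X Z) UNIV (comp h) = (1 / real CARD('n)) *
     (lin_weight L a * (\<Sum>i\<in>UNIV. ((X *v fst h)$i)^2) + lin_weight L b * (\<Sum>i\<in>UNIV. ((Z *v snd h)$i)^2)
     + c * (\<Sum>i\<in>UNIV. ((X *v fst h)$i - (Z *v snd h)$i)^2))"
proof -
  have "quad_form (lf_matrix L a b c X Z) UNIV (comp h) =
     (\<Sum>i\<in>UNIV. \<Sum>j\<in>UNIV. ((lin_weight L a + c) / real CARD('n)) * gram X X i j * fst h$i * fst h$j)
   + (\<Sum>i\<in>UNIV. \<Sum>j\<in>UNIV. (- c / real CARD('n)) * gram X Z i j * fst h$i * snd h$j)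
   + ((\<Sum>i\<in>UNIV. \<Sum>j\<in>UNIV. (- c / real CARD('n)) * gram Z X i j * snd h$i * fst h$j)
   + (\<Sum>i\<in>UNIV. \<Sum>j\<in>UNIV. ((lin_weight L b + c) / real CARD('n)) * gram Z Z i j * snd h$i * snd h$j))"
    unfolding quad_form_def sum_UNIV_Plus
    by (cases L) (simp_all add: lf_matrix_def Let_def lin_weight_def sum.distrib algebra_simps)
  also have "\<dots> = (1 / real CARD('n)) *
     (lin_weight L a * (\<Sum>i\<in>UNIV. ((X *v fst h)$i)^2) + lin_weight L b * (\<Sum>i\<in>UNIV. ((Z *v snd h)$i)^2)
     + c * (\<Sum>i\<in>UNIV. ((X *v fst h)$i - (Z *v snd h)$i)^2))"
    unfolding sum_gram_eq
    by (simp add: power2_eq_square algebra_simps sum.distrib sum_subtractf sum_distrib_left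
        sum_divide_distrib diff_divide_distrib add_divide_distrib sum_negf)
  finally show ?thesis .
qed

lemma quad_form_lf_matrix_le_hess:
  fixes X :: "real^'p1^'n" and Z :: "real^'p2^'n"
  assumes "0 \<le> a" "0 \<le> b"
  shows "quad_form (lf_matrix L a b c X Z) UNIV (comp h) \<le> h \<bullet> fobj_hess L a b c X Z x h"
proof (cases L)
  case Lin then show ?thesis by (simp add: inner_fobj_hess quad_form_lf_matrix lin_weight_def scalar_loss_d2_def)
next
  case Log
  have "0 \<le> a * (\<Sum>i\<in>UNIV. scalar_loss_d2 L ((X *v fst x)$i) * ((X *v fst h)$i)^2)"
       "0 \<le> b * (\<Sum>i\<in>UNIV. scalar_loss_d2 L ((Z *v snd x)$i) * ((Z *v snd h)$i)^2)"
    using assms scalar_loss_d2_nonneg by (auto intro!: mult_nonneg_nonneg sum_nonneg)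
  then show ?thesis using Log unfolding inner_fobj_hess quad_form_lf_matrix lin_weight_def
    by (simp add: divide_right_mono)
qed

lemma quad_form_UNIV_eq_suppP:
  assumes "suppP h \<subseteq> T"
  shows "quad_form M UNIV (comp h) = quad_form M T (comp h)"
proof -
  have zero: "\<And>t. t \<notin> T \<Longrightarrow> comp h t = 0" using assms unfolding suppP_def by auto
  have "(\<Sum>s\<in>UNIV. \<Sum>t\<in>UNIV. M s t * comp h s * comp h t)
      = (\<Sum>s\<in>T. \<Sum>t\<in>UNIV. M s t * comp h s * comp h t)"
    by (rule sum.mono_neutral_right) (auto simp: zero)
  also have "\<dots> = (\<Sum>s\<in>T. \<Sum>t\<in>T. M s t * comp h s * comp h t)"
    by (rule sum.cong[OF refl], rule sum.mono_neutral_right) (auto simp: zero)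
  finally show ?thesis unfolding quad_form_def .
qed

lemma inner_fobj_hess_ge_l_f:
  fixes X :: "real^'p1^'n" and Z :: "real^'p2^'n"
  assumes "0 \<le> a" "0 \<le> b" "card (suppP h) \<le> s"
  shows "l_f L a b c X Z s * (norm h)^2 \<le> h \<bullet> fobj_hess L a b c X Z x h"
proof -
  have "(norm h)^2 = (\<Sum>t\<in>suppP h. (comp h t)^2)"
    unfolding power2_norm_eq_sum_comp by (rule sum.mono_neutral_right) (auto simp: suppP_def)
  then have "l_f L a b c X Z s * (norm h)^2 \<le> quad_form (lf_matrix L a b c X Z) (suppP h) (comp h)"
    unfolding l_f_def using quad_form_ge_min_sub_eig[OF sym_lf_matrix assms(3)] by simp
  also have "\<dots> = quad_form (lf_matrix L a b c X Z) UNIV (comp h)"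
    by (rule quad_form_UNIV_eq_suppP[symmetric]) simp
  also have "\<dots> \<le> h \<bullet> fobj_hess L a b c X Z x h" by (rule quad_form_lf_matrix_le_hess[OF assms(1,2)])
  finally show ?thesis .
qed

section \<open>Projection onto sparse vectors\<close>

lemma proj_sparse_l0_le: "u \<in> proj_sparse s w \<Longrightarrow> l0 u \<le> s"
  unfolding proj_sparse_def SparseSet_def by auto

lemma proj_sparse_sum_sq_le:
  assumes "u \<in> proj_sparse s w" "l0 u' \<le> s"
  shows "(\<Sum>j\<in>UNIV. (w$j - u$j)^2) \<le> (\<Sum>j\<in>UNIV. (w$j - u'$j)^2)"
proof -
  have "norm (w - u) \<le> norm (w - u')" using assms unfolding proj_sparse_def SparseSet_def by auto
  then have "(norm (w - u))^2 \<le> (norm (w - u'))^2" by (simp add: power_mono)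
  then show ?thesis by (simp add: power2_norm_vec_eq_sum)
qed

lemma proj_sparse_eq_on_supp:
  assumes u: "u \<in> proj_sparse s w" and i: "i \<in> supp u"
  shows "u$i = w$i"
proof -
  define u' where "u' = (\<chi> j. if j = i then w$i else u$j)"
  have "supp u' \<subseteq> supp u" using i unfolding supp_def u'_def by auto
  then have "l0 u' \<le> l0 u" unfolding l0_def by (simp add: card_mono)
  then have "l0 u' \<le> s" using proj_sparse_l0_le[OF u] by simp
  from proj_sparse_sum_sq_le[OF u this] have "0 \<le> (\<Sum>j\<in>UNIV. (w$j - u'$j)^2 - (w$j - u$j)^2)"
    by (simp add: sum_subtractf)
  also have "\<dots> = (\<Sum>j\<in>UNIV. if j = i then - ((w$i - u$i)^2) else 0)"
    by (rule sum.cong) (auto simp: u'_def)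
  finally show ?thesis by simp
qed

lemma proj_sparse_zero_off_supp:
  assumes u: "u \<in> proj_sparse s w" and "l0 u < s" and i: "i \<notin> supp u"
  shows "w$i = 0"
proof -
  define u' where "u' = (\<chi> j. if j = i then w$i else u$j)"
  have "supp u' \<subseteq> insert i (supp u)" unfolding supp_def u'_def by auto
  then have "card (supp u') \<le> card (insert i (supp u))" by (intro card_mono) auto
  moreover have "card (insert i (supp u)) \<le> card (supp u) + 1" by (simp add: card_insert_if)
  ultimately have "l0 u' \<le> l0 u + 1" unfolding l0_def by linarith
  then have "l0 u' \<le> s" using \<open>l0 u < s\<close> by simp
  from proj_sparse_sum_sq_le[OF u this] have "0 \<le> (\<Sum>j\<in>UNIV. (w$j - u'$j)^2 - (w$j - u$j)^2)"
    by (simp add: sum_subtractf)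
  also have "\<dots> = (\<Sum>j\<in>UNIV. if j = i then - ((w$i - u$i)^2) else 0)"
    by (rule sum.cong) (auto simp: u'_def)
  finally show ?thesis using i unfolding supp_def by simp
qed

lemma proj_sparse_abs_off_supp_le:
  assumes u: "u \<in> proj_sparse s w" and i: "i \<notin> supp u" and m: "m \<in> supp u"
  shows "\<bar>w$i\<bar> \<le> \<bar>w$m\<bar>"
proof -
  have "i \<noteq> m" using i m by auto
  define u' where "u' = (\<chi> j. if j = i then w$i else if j = m then 0 else u$j)"
  have "supp u' \<subseteq> insert i (supp u - {m})" unfolding supp_def u'_def by auto
  then have "card (supp u') \<le> card (insert i (supp u - {m}))" by (intro card_mono) auto
  also have "\<dots> \<le> card (supp u - {m}) + 1" by (simp add: card_insert_if)
  also have "\<dots> = l0 u" unfolding l0_def using card_Suc_Diff1[of "supp u" m] m by simp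
  finally have "l0 u' \<le> s" using proj_sparse_l0_le[OF u] unfolding l0_def by simp
  from proj_sparse_sum_sq_le[OF u this] have "0 \<le> (\<Sum>j\<in>UNIV. (w$j - u'$j)^2 - (w$j - u$j)^2)"
    by (simp add: sum_subtractf)
  also have "\<dots> = (\<Sum>j\<in>UNIV. (if j = i then - ((w$i)^2) else 0) + (if j = m then (w$m)^2 else 0))"
    using proj_sparse_eq_on_supp[OF u m] i \<open>i \<noteq> m\<close> by (intro sum.cong) (auto simp: u'_def supp_def)
  also have "\<dots> = (w$m)^2 - (w$i)^2" by (simp add: sum.distrib)
  finally show ?thesis by (simp add: abs_le_square_iff)
qed

text \<open>Either \<open>u\<close> has fewer than \<open>s\<close> nonzeros, and then \<open>w\<close> vanishes off \<open>supp u\<close>, or some entry of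
  \<open>u = w\<close> outside \<open>supp v\<close> dominates every discarded entry of \<open>w\<close>.\<close>

lemma proj_sparse_abs_off_supp_le_dist:
  assumes u: "u \<in> proj_sparse s w" and i: "i \<notin> supp u" and v: "l0 v < s"
  shows "\<bar>w$i\<bar> \<le> norm (u - v)"
proof (cases "l0 u < s")
  case True
  then show ?thesis using proj_sparse_zero_off_supp[OF u _ i] by simp
next
  case False
  then have "l0 v < l0 u" using v by simp
  then have "\<not> supp u \<subseteq> supp v" unfolding l0_def by (meson card_mono finite leD)
  then obtain m where m: "m \<in> supp u" "m \<notin> supp v" by blast
  have "\<bar>w$i\<bar> \<le> \<bar>w$m\<bar>" by (rule proj_sparse_abs_off_supp_le[OF u i m(1)])
  also have "\<dots> = \<bar>(u - v)$m\<bar>" using proj_sparse_eq_on_supp[OF u m(1)] m(2) by (simp add: supp_def)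
  also have "\<dots> \<le> norm (u - v)" by (rule component_le_norm_cart)
  finally show ?thesis .
qed

lemma proj_step_inner_le:
  fixes x p g :: "'a::real_inner"
  assumes "norm ((x - \<alpha> *\<^sub>R g) - p) \<le> norm ((x - \<alpha> *\<^sub>R g) - x)"
  shows "(norm (p - x))^2 + 2 * \<alpha> * (g \<bullet> (p - x)) \<le> 0"
proof -
  have "(x - \<alpha> *\<^sub>R g) - p = - ((p - x) + \<alpha> *\<^sub>R g)" "(x - \<alpha> *\<^sub>R g) - x = - (\<alpha> *\<^sub>R g)"
    by (simp_all add: algebra_simps)
  then have "norm ((p - x) + \<alpha> *\<^sub>R g) \<le> norm (\<alpha> *\<^sub>R g)"
    using assms by (simp only: norm_minus_cancel)
  then have "(norm ((p - x) + \<alpha> *\<^sub>R g))^2 \<le> (norm (\<alpha> *\<^sub>R g))^2"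
    by (simp add: power_mono)
  then show ?thesis
    unfolding power2_norm_eq_inner by (simp add: inner_add_left inner_add_right inner_commute algebra_simps)
qed

lemma fobj_proj_step_decrease:
  fixes X :: "real^'p1^'n" and Z :: "real^'p2^'n"
  assumes nonneg: "0 \<le> a" "0 \<le> b" "0 \<le> c"
    and sparse: "fst x \<in> SparseSet s1" "snd x \<in> SparseSet s2"
    and p: "fst p \<in> proj_sparse s1 (fst x - \<alpha> *\<^sub>R fst (fobj_grad L a b c X Z y x))"
           "snd p \<in> proj_sparse s2 (snd x - \<alpha> *\<^sub>R snd (fobj_grad L a b c X Z y x))"
    and step: "0 < \<alpha>" "\<alpha> \<le> 1 / (fobj_smoothness a b c X Z + \<sigma>)" "0 < \<sigma>"
  shows "fobj L a b c X Z y p \<le> fobj L a b c X Z y x - \<sigma>/2 * (norm (p - x))^2"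
proof -
  let ?g = "fobj_grad L a b c X Z y x" and ?K = "fobj_smoothness a b c X Z"
  define d where "d = p - x"
  have "(norm (fst d))^2 + 2 * \<alpha> * (fst ?g \<bullet> fst d) \<le> 0"
    using p(1) sparse(1) unfolding proj_sparse_def d_def by (auto intro!: proj_step_inner_le)
  moreover have "(norm (snd d))^2 + 2 * \<alpha> * (snd ?g \<bullet> snd d) \<le> 0"
    using p(2) sparse(2) unfolding proj_sparse_def d_def by (auto intro!: proj_step_inner_le)
  ultimately have "(norm d)^2 + 2 * \<alpha> * (?g \<bullet> d) \<le> 0"
    by (simp add: power2_norm_prod inner_prod_def algebra_simps)
  then have gd: "?g \<bullet> d \<le> - ((norm d)^2 / (2 * \<alpha>))" using step(1) by (simp add: field_simps)
  have "0 \<le> ?K" using nonneg by (simp add: fobj_smoothness_def)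
  then have inv_step: "?K + \<sigma> \<le> 1 / \<alpha>" using step by (simp add: field_simps)
  have "fobj L a b c X Z y (x + d) \<le> fobj L a b c X Z y x + ?g \<bullet> d + ?K / 2 * (norm d)^2"
    by (rule fobj_le_first_order[OF nonneg])
  also have "\<dots> \<le> fobj L a b c X Z y x - (1/\<alpha> - ?K) / 2 * (norm d)^2"
    using gd by (simp add: field_simps)
  also have "\<dots> \<le> fobj L a b c X Z y x - \<sigma> / 2 * (norm d)^2"
    using inv_step by (intro diff_left_mono mult_right_mono) auto
  finally show ?thesis unfolding d_def by simp
qed

section \<open>Limits of sparse sequences\<close>

lemma eventually_supp_subset:
  fixes x :: "nat \<Rightarrow> real^'p"
  assumes "x \<longlonglongrightarrow> xs"
  shows "eventually (\<lambda>k. supp xs \<subseteq> supp (x k)) sequentially"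
proof -
  have "\<forall>i\<in>supp xs. eventually (\<lambda>k. x k $ i \<noteq> 0) sequentially"
    using tendsto_imp_eventually_ne[OF tendsto_vec_nth[OF assms]] unfolding supp_def by auto
  then have "eventually (\<lambda>k. \<forall>i\<in>supp xs. x k $ i \<noteq> 0) sequentially"
    by (intro eventually_ball_finite) auto
  then show ?thesis by eventually_elim (auto simp: supp_def)
qed

lemma l0_limit_le:
  fixes x :: "nat \<Rightarrow> real^'p"
  assumes "x \<longlonglongrightarrow> xs" "\<And>k. l0 (x k) \<le> s"
  shows "l0 xs \<le> s"
proof -
  obtain k where "supp xs \<subseteq> supp (x k)"
    using eventually_supp_subset[OF assms(1)] by (metis eventually_sequentially order_refl)
  then have "l0 xs \<le> l0 (x k)" unfolding l0_def by (intro card_mono) auto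
  then show ?thesis using assms(2)[of k] by linarith
qed

lemma eventually_supp_eq:
  fixes x :: "nat \<Rightarrow> real^'p"
  assumes "x \<longlonglongrightarrow> xs" "\<And>k. l0 (x k) \<le> s" "l0 xs = s"
  shows "eventually (\<lambda>k. supp xs = supp (x k)) sequentially"
  using eventually_supp_subset[OF assms(1)]
proof eventually_elim
  case (elim k)
  have "card (supp (x k)) \<le> card (supp xs)" using assms(2,3) unfolding l0_def by metis
  moreover have "card (supp xs) \<le> card (supp (x k))" using elim by (intro card_mono) auto
  ultimately show ?case using elim by (intro card_subset_eq) auto
qed

lemma eventually_supp_limit:
  fixes x :: "nat \<Rightarrow> real^'p"
  assumes "x \<longlonglongrightarrow> xs" "\<And>k. l0 (x k) \<le> s"
  shows "eventually (\<lambda>k. (l0 xs < s \<longrightarrow> supp xs \<subseteq> supp (x k))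
                         \<and> (l0 xs = s \<longrightarrow> supp xs = supp (x k))) sequentially"
proof (cases "l0 xs = s")
  case True
  from eventually_supp_eq[OF assms True] show ?thesis by eventually_elim (use True in auto)
next
  case False
  from eventually_supp_subset[OF assms(1)] show ?thesis by eventually_elim (use False in auto)
qed

lemma eventually_supp_eq_or_norm_less:
  fixes x y g :: "nat \<Rightarrow> real^'p"
  assumes "x \<longlonglongrightarrow> xs" "y \<longlonglongrightarrow> xs" "\<And>k. l0 (x k) \<le> s" "\<And>k. l0 (y k) \<le> s"
    and "g \<longlonglongrightarrow> gs" "l0 xs < s \<longrightarrow> gs = 0" "0 < \<epsilon>"
  shows "eventually (\<lambda>k. supp (x k) = supp (y k) \<or> norm (g k) < \<epsilon>) sequentially"
proof (cases "l0 xs = s")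
  case True
  from eventually_supp_eq[OF assms(1,3) True] eventually_supp_eq[OF assms(2,4) True]
  show ?thesis by eventually_elim simp
next
  case False
  then have "l0 xs < s" using l0_limit_le[OF assms(1,3)] by simp
  then have "(\<lambda>k. norm (g k)) \<longlonglongrightarrow> 0" using tendsto_norm[OF assms(5)] assms(6) by simp
  from order_tendstoD(2)[OF this \<open>0 < \<epsilon>\<close>] show ?thesis by eventually_elim simp
qed

text \<open>At each coordinate either the limit gradient vanishes, or the supports of \<open>x k\<close> have
  stabilised to one that excludes it.\<close>

lemma restricted_tendsto_zero:
  fixes x g :: "nat \<Rightarrow> real^'p"
  assumes x: "x \<longlonglongrightarrow> xs" "\<And>k. l0 (x k) \<le> s" and g: "g \<longlonglongrightarrow> gs"
    and on_supp: "\<forall>i\<in>supp xs. gs$i = 0" and not_full: "l0 xs < s \<longrightarrow> gs = 0"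
  shows "(\<lambda>k. \<chi> i. if x k $ i \<noteq> 0 then g k $ i else 0) \<longlonglongrightarrow> 0"
proof (rule vec_tendstoI)
  fix i
  have "(\<lambda>k. if x k $ i \<noteq> 0 then g k $ i else 0) \<longlonglongrightarrow> 0"
  proof (cases "gs$i = 0")
    case True
    have "(\<lambda>k. \<bar>g k $ i\<bar>) \<longlonglongrightarrow> 0" using tendsto_rabs[OF tendsto_vec_nth[OF g, of i]] True by simp
    then show ?thesis by (rule Lim_null_comparison[rotated]) (auto intro: always_eventually)
  next
    case False
    then have "l0 xs = s" "i \<notin> supp xs"
      using l0_limit_le[OF x] on_supp not_full by (auto simp: le_less)
    from eventually_supp_eq[OF x this(1)] have "eventually (\<lambda>k. x k $ i = 0) sequentially"
      by eventually_elim (use \<open>i \<notin> supp xs\<close> in \<open>auto simp: supp_def\<close>)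
    then show ?thesis by (rule tendsto_eventually[OF eventually_mono]) auto
  qed
  then show "(\<lambda>k. (\<chi> i. if x k $ i \<noteq> 0 then g k $ i else 0) $ i) \<longlonglongrightarrow> 0 $ i" by simp
qed

lemma proj_sparse_step_eq_on_supp:
  assumes "p \<in> proj_sparse s (b - \<alpha> *\<^sub>R g)" "i \<in> supp p" "0 \<le> \<alpha>"
  shows "\<alpha> * \<bar>g$i\<bar> = \<bar>b$i - p$i\<bar>"
  using proj_sparse_eq_on_supp[OF assms(1,2)] assms(3) by (simp add: abs_mult)

lemma proj_sparse_step_bound:
  assumes p: "p \<in> proj_sparse s (b - \<alpha> *\<^sub>R g)" and "l0 v < s" "0 \<le> \<alpha>"
  shows "\<alpha> * \<bar>g$i\<bar> \<le> \<bar>b$i - p$i\<bar> + \<bar>b$i\<bar> + norm (p - v)"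
proof (cases "i \<in> supp p")
  case True
  then show ?thesis using proj_sparse_step_eq_on_supp[OF p _ \<open>0 \<le> \<alpha>\<close>] by simp
next
  case False
  have "\<bar>b$i - \<alpha> * g$i\<bar> \<le> norm (p - v)"
    using proj_sparse_abs_off_supp_le_dist[OF p False \<open>l0 v < s\<close>] by simp
  moreover have "\<alpha> * \<bar>g$i\<bar> \<le> \<bar>b$i\<bar> + \<bar>b$i - \<alpha> * g$i\<bar>"
    using abs_triangle_ineq4[of "b$i" "b$i - \<alpha> * g$i"] \<open>0 \<le> \<alpha>\<close> by (simp add: abs_mult)
  ultimately show ?thesis by linarith
qed

lemma limit_nth_eq_0_if_scaled_le:
  fixes g :: "nat \<Rightarrow> real^'p"
  assumes "g \<longlonglongrightarrow> gs" "0 < c" "\<And>k. c \<le> \<alpha> k"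
    and "eventually (\<lambda>k. \<alpha> k * \<bar>g k $ i\<bar> \<le> e k) sequentially" "e \<longlonglongrightarrow> 0"
  shows "gs$i = 0"
proof -
  have "(\<lambda>k. c * \<bar>g k $ i\<bar>) \<longlonglongrightarrow> c * \<bar>gs$i\<bar>" by (intro tendsto_intros assms(1))
  moreover have "eventually (\<lambda>k. c * \<bar>g k $ i\<bar> \<le> e k) sequentially"
    using assms(4) by eventually_elim (use assms(3) in \<open>meson abs_ge_zero mult_right_mono order_trans\<close>)
  ultimately have "c * \<bar>gs$i\<bar> \<le> 0" using assms(5) by (intro LIMSEQ_le) (auto simp: eventually_sequentially)
  then show ?thesis using \<open>0 < c\<close> by (simp add: mult_le_0_iff)
qed

lemma proj_sparse_limit_stationary:
  fixes b p g :: "nat \<Rightarrow> real^'p" and \<alpha> :: "nat \<Rightarrow> real"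
  assumes proj: "\<And>k. p k \<in> proj_sparse s (b k - \<alpha> k *\<^sub>R g k)"
    and step: "\<And>k. \<alpha>min \<le> \<alpha> k" "0 < \<alpha>min"
    and lim: "b \<longlonglongrightarrow> bs" "p \<longlonglongrightarrow> bs" "g \<longlonglongrightarrow> gs"
  shows "\<forall>i\<in>supp bs. gs$i = 0" and "l0 bs < s \<longrightarrow> gs = 0"
proof -
  note limit_zero = limit_nth_eq_0_if_scaled_le[OF lim(3) step(2,1)]
  have nonneg: "0 \<le> \<alpha> k" for k using step(1)[of k] step(2) by linarith
  have gap: "(\<lambda>k. \<bar>b k $ i - p k $ i\<bar>) \<longlonglongrightarrow> 0" for i
    using tendsto_rabs[OF tendsto_diff[OF tendsto_vec_nth[OF lim(1), of i] tendsto_vec_nth[OF lim(2), of i]]]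
    by simp
  have on_supp: "gs$i = 0" if "i \<in> supp bs" for i
  proof (rule limit_zero[OF _ gap])
    show "eventually (\<lambda>k. \<alpha> k * \<bar>g k $ i\<bar> \<le> \<bar>b k $ i - p k $ i\<bar>) sequentially"
      using eventually_supp_subset[OF lim(2)]
      by eventually_elim (use that proj_sparse_step_eq_on_supp[OF proj _ nonneg] in auto)
  qed
  then show "\<forall>i\<in>supp bs. gs$i = 0" by blast
  show "l0 bs < s \<longrightarrow> gs = 0"
  proof (intro impI iffD2[OF vec_eq_iff] allI)
    fix i assume "l0 bs < s"
    show "gs$i = 0$i"
    proof (cases "i \<in> supp bs")
      case False
      have "(\<lambda>k. \<bar>b k $ i - p k $ i\<bar> + \<bar>b k $ i\<bar> + norm (p k - bs)) \<longlonglongrightarrow> 0 + \<bar>bs$i\<bar> + norm (bs - bs)"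
        by (intro tendsto_intros gap lim)
      then have "(\<lambda>k. \<bar>b k $ i - p k $ i\<bar> + \<bar>b k $ i\<bar> + norm (p k - bs)) \<longlonglongrightarrow> 0"
        using False by (simp add: supp_def)
      with proj_sparse_step_bound[OF proj \<open>l0 bs < s\<close> nonneg] have "gs$i = 0"
        by (intro limit_zero always_eventually) auto
      then show ?thesis by simp
    qed (use on_supp in simp)
  qed
qed

section \<open>The Newton step\<close>

definition restrict_pair :: "('p1 + 'p2) set \<Rightarrow> (real^'p1) \<times> (real^'p2) \<Rightarrow> (real^'p1) \<times> (real^'p2)" where
  "restrict_pair \<Gamma> w = ((\<chi> i. if Inl i \<in> \<Gamma> then fst w $ i else 0), (\<chi> j. if Inr j \<in> \<Gamma> then snd w $ j else 0))"

lemma comp_restrict_pair: "comp (restrict_pair \<Gamma> w) t = (if t \<in> \<Gamma> then comp w t else 0)"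
  by (cases t) (auto simp: restrict_pair_def)

lemma restrict_pair_suppP:
  "restrict_pair (suppP u) g = ((\<chi> i. if fst u $ i \<noteq> 0 then fst g $ i else 0),
                                (\<chi> j. if snd u $ j \<noteq> 0 then snd g $ j else 0))"
  by (simp add: restrict_pair_def suppP_def)

lemma comp_add: "comp (x + y) t = comp x t + comp y t"
  by (cases t) auto

lemma comp_diff: "comp (x - y) t = comp x t - comp y t"
  by (cases t) auto

lemma comp_minus: "comp (- x) t = - comp x t"
  by (cases t) auto

lemma comp_zero: "comp 0 t = 0"
  by (cases t) auto

lemma comp_scaleR: "comp (r *\<^sub>R x) t = r * comp x t"
  by (cases t) auto

lemma comp_eqI:
  assumes "\<And>t. comp x t = comp y t"
  shows "x = y"
proof -
  have "fst x $ i = fst y $ i" "snd x $ j = snd y $ j" for i j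
    using assms[of "Inl i"] assms[of "Inr j"] by simp_all
  then show ?thesis by (simp add: prod_eq_iff vec_eq_iff)
qed

lemma linear_restrict_pair: "linear (restrict_pair \<Gamma>)"
  by (rule linearI; rule comp_eqI; simp add: comp_restrict_pair comp_add comp_scaleR)

lemma inner_eq_sum_comp_on:
  assumes "\<forall>t. t \<notin> \<Gamma> \<longrightarrow> comp d t = 0"
  shows "g \<bullet> d = (\<Sum>t\<in>\<Gamma>. comp g t * comp d t)"
  unfolding inner_eq_sum_comp using assms by (intro sum.mono_neutral_right) auto

lemma card_suppP_le:
  assumes "\<forall>t. t \<notin> \<Gamma> \<longrightarrow> comp d t = 0"
  shows "card (suppP d) \<le> card \<Gamma>"
  using assms unfolding suppP_def by (intro card_mono) auto

lemma card_suppP_le_l0: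
  fixes w :: "(real^'p1) \<times> (real^'p2)"
  shows "card (suppP w) \<le> l0 (fst w) + l0 (snd w)"
proof -
  have "suppP w \<subseteq> Inl ` supp (fst w) \<union> Inr ` supp (snd w)"
  proof
    fix t assume "t \<in> suppP w"
    then show "t \<in> Inl ` supp (fst w) \<union> Inr ` supp (snd w)"
      by (cases t) (auto simp: suppP_def supp_def)
  qed
  then have "card (suppP w) \<le> card (Inl ` supp (fst w) \<union> Inr ` supp (snd w))" by (intro card_mono) auto
  also have "\<dots> \<le> card (Inl ` supp (fst w) :: ('p1 + 'p2) set) + card (Inr ` supp (snd w) :: ('p1 + 'p2) set)"
    by (rule card_Un_le)
  also have "\<dots> \<le> l0 (fst w) + l0 (snd w)" unfolding l0_def by (intro add_mono card_image_le) auto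
  finally show ?thesis .
qed

text \<open>The linear map sending \<open>d\<close> to \<open>H\<close> of its restriction on \<open>\<Gamma>\<close>, and to \<open>d\<close> itself off \<open>\<Gamma>\<close>,
  is injective by positivity of \<open>H\<close> on vectors supported in \<open>\<Gamma>\<close>, hence onto.\<close>

lemma restricted_linear_system_solvable:
  fixes H :: "(real^'p1) \<times> (real^'p2) \<Rightarrow> (real^'p1) \<times> (real^'p2)"
  assumes linH: "linear H"
    and pos: "\<And>d. \<forall>t. t \<notin> \<Gamma> \<longrightarrow> comp d t = 0 \<Longrightarrow> d \<noteq> 0 \<Longrightarrow> 0 < d \<bullet> H d"
  obtains d where "\<forall>t. t \<notin> \<Gamma> \<longrightarrow> comp d t = 0" "\<forall>t\<in>\<Gamma>. comp (H d) t = comp r t"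
proof -
  define T where "T = (\<lambda>d. restrict_pair \<Gamma> (H (restrict_pair \<Gamma> d)) + (d - restrict_pair \<Gamma> d))"
  have linT: "linear T" unfolding T_def
    by (intro linear_compose_add linear_compose_sub linear_id[unfolded id_def]
        linear_compose[OF linear_restrict_pair, unfolded o_def]
        linear_compose[OF _ linear_restrict_pair, unfolded o_def]
        linear_compose[OF linH linear_restrict_pair, unfolded o_def])
  have comp_T: "comp (T d) t = (if t \<in> \<Gamma> then comp (H (restrict_pair \<Gamma> d)) t else comp d t)" for d t
    unfolding T_def by (simp add: comp_add comp_diff comp_restrict_pair)
  have restrict_id: "restrict_pair \<Gamma> d = d" if "\<forall>t. t \<notin> \<Gamma> \<longrightarrow> comp d t = 0" for d
    using that by (intro comp_eqI) (auto simp: comp_restrict_pair)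
  have "inj T"
  proof (subst linear_injective_0[OF linT], intro allI impI)
    fix d assume "T d = 0"
    then have off: "\<forall>t. t \<notin> \<Gamma> \<longrightarrow> comp d t = 0" and on: "\<forall>t\<in>\<Gamma>. comp (H d) t = 0"
      using comp_T restrict_id by (metis comp_zero)+
    have "d \<bullet> H d = 0"
      by (subst inner_commute, subst inner_eq_sum_comp_on[OF off]) (simp add: on)
    then show "d = 0" using pos[OF off] by force
  qed
  then have "surj T" by (intro eucl.linear_injective_imp_surjective linT) auto
  then obtain d where d: "T d = restrict_pair \<Gamma> r" by (metis surjD)
  then have off: "\<forall>t. t \<notin> \<Gamma> \<longrightarrow> comp d t = 0"
    using comp_T by (metis comp_restrict_pair)
  moreover have "\<forall>t\<in>\<Gamma>. comp (H d) t = comp r t"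
    using d comp_T restrict_id[OF off] by (metis comp_restrict_pair)
  ultimately show ?thesis using that by blast
qed

lemma newton_direction_norm_le:
  assumes off: "\<forall>t. t \<notin> \<Gamma> \<longrightarrow> comp d t = 0"
    and sol: "\<forall>t\<in>\<Gamma>. comp Hd t = - comp g t"
    and curv: "l * (norm d)^2 \<le> d \<bullet> Hd" and "0 < l"
  shows "g \<bullet> d = - (d \<bullet> Hd)" and "l * norm d \<le> norm (restrict_pair \<Gamma> g)"
proof -
  show gd: "g \<bullet> d = - (d \<bullet> Hd)"
    using sol unfolding inner_eq_sum_comp_on[OF off] inner_commute[of d Hd]
    by (simp add: sum_negf[symmetric])
  have "l * norm d * norm d \<le> - (restrict_pair \<Gamma> g \<bullet> d)"
    using curv gd unfolding inner_eq_sum_comp_on[OF off]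
    by (simp add: comp_restrict_pair power2_eq_square mult.assoc)
  also have "\<dots> \<le> norm (restrict_pair \<Gamma> g) * norm d"
    by (metis Cauchy_Schwarz_ineq2 abs_le_iff)
  finally show "l * norm d \<le> norm (restrict_pair \<Gamma> g)"
    by (cases "d = 0") (use \<open>0 < l\<close> in \<open>simp_all add: mult_le_cancel_right\<close>)
qed

lemma newton_step_decrease:
  fixes F :: "'a::real_inner \<Rightarrow> real"
  assumes taylor: "F (u + d) \<le> F u + g \<bullet> d + 1/2 * (d \<bullet> Hd) + C * (norm d)^3"
    and curv: "l * (norm d)^2 \<le> d \<bullet> Hd" and newton: "g \<bullet> d = - (d \<bullet> Hd)"
    and small: "C * norm d \<le> (l - \<sigma>) / 2"
  shows "F (u + d) \<le> F u - \<sigma>/2 * (norm d)^2"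
proof -
  have "F (u + d) \<le> F u - 1/2 * (d \<bullet> Hd) + (C * norm d) * (norm d)^2"
    using taylor newton by (simp add: power2_eq_square power3_eq_cube mult.assoc)
  also have "\<dots> \<le> F u - 1/2 * (l * (norm d)^2) + ((l - \<sigma>) / 2) * (norm d)^2"
    using curv small by (intro add_mono diff_mono mult_right_mono) auto
  also have "\<dots> = F u - \<sigma>/2 * (norm d)^2" by (simp add: field_simps)
  finally show ?thesis .
qed

lemma newton_sol_supp_subset:
  assumes "newton_sol F u v"
  shows "supp (fst v) \<subseteq> supp (fst u)" "supp (snd v) \<subseteq> supp (snd u)"
proof -
  have "comp v t = 0" if "t \<notin> suppP u" for t using assms that unfolding newton_sol_def by auto
  from this[of "Inl _"] this[of "Inr _"] show "supp (fst v) \<subseteq> supp (fst u)" "supp (snd v) \<subseteq> supp (snd u)"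
    unfolding suppP_def supp_def by auto
qed

lemma le_half_gap_if_le_radius:
  fixes l \<sigma> C t :: real
  assumes "0 < l" "0 \<le> C" "0 \<le> t" "l * t \<le> l * ((l - \<sigma>) / (2 * (C + 1)))"
  shows "C * t \<le> (l - \<sigma>) / 2"
proof -
  have "(C + 1) * t \<le> (C + 1) * ((l - \<sigma>) / (2 * (C + 1)))"
    using assms by (intro mult_left_mono) (simp_all only: mult_le_cancel_left_pos)
  also have "\<dots> = (l - \<sigma>) / 2" using \<open>0 \<le> C\<close> by (simp del: mult_nonneg_nonneg add: divide_simps)
  finally show ?thesis using \<open>0 \<le> t\<close> by (simp add: distrib_right)
qed

definition newton_radius :: "loss_kind \<Rightarrow> real \<Rightarrow> real \<Rightarrow> real \<Rightarrow> real^'p1^'n \<Rightarrow> real^'p2^'n \<Rightarrow> nat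
    \<Rightarrow> real \<Rightarrow> real" where
  "newton_radius L a b c X Z s \<sigma> = (let l = l_f L a b c X Z s in
     l * (l - \<sigma>) / (2 * ((a + b) * (row_norm_sum X Z)^3 + 1)))"

lemma newton_radius_pos:
  assumes "0 \<le> a" "0 \<le> b" "0 \<le> \<sigma>" "\<sigma> < l_f L a b c X Z s"
  shows "0 < newton_radius L a b c X Z s \<sigma>"
  using assms row_norm_sum_pos[of X Z] unfolding newton_radius_def Let_def
  by (intro divide_pos_pos mult_pos_pos) (auto intro: add_nonneg_pos)

text \<open>A small restricted gradient makes the Newton step short, so that the cubic Taylor remainder
  is dominated by the curvature \<open>l_f\<close>.\<close>

lemma fobj_newton_step:
  fixes X :: "real^'p1^'n" and Z :: "real^'p2^'n"
  assumes nonneg: "0 \<le> a" "0 \<le> b" "0 \<le> \<sigma>" and l: "\<sigma> < l_f L a b c X Z s"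
    and card: "card (suppP u) \<le> s"
    and small: "norm (restrict_pair (suppP u) (fobj_grad L a b c X Z y u)) \<le> newton_radius L a b c X Z s \<sigma>"
  shows "\<exists>w. newton_sol (fobj L a b c X Z y) u w
           \<and> fobj L a b c X Z y w \<le> fobj L a b c X Z y u - \<sigma>/2 * (norm (w - u))^2"
proof -
  let ?F = "fobj L a b c X Z y"
  let ?l = "l_f L a b c X Z s" and ?C = "(a + b) * (row_norm_sum X Z)^3"
  let ?H = "fobj_hess L a b c X Z u" and ?g = "fobj_grad L a b c X Z y u"
  have "0 < ?l" using l nonneg(3) by linarith
  have curv: "?l * (norm d)^2 \<le> d \<bullet> ?H d" if "\<forall>t. t \<notin> suppP u \<longrightarrow> comp d t = 0" for d
    using inner_fobj_hess_ge_l_f[OF nonneg(1,2) le_trans[OF card_suppP_le[OF that] card]] .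
  have "linear ?H" using has_derivative_fobj_grad[THEN has_derivative_linear] .
  moreover have "0 < d \<bullet> ?H d" if "\<forall>t. t \<notin> suppP u \<longrightarrow> comp d t = 0" "d \<noteq> 0" for d
  proof -
    have "0 < ?l * (norm d)^2" using \<open>0 < ?l\<close> \<open>d \<noteq> 0\<close> by simp
    with curv[OF that(1)] show ?thesis by linarith
  qed
  ultimately obtain d where off: "\<forall>t. t \<notin> suppP u \<longrightarrow> comp d t = 0"
    and sol: "\<forall>t\<in>suppP u. comp (?H d) t = comp (- ?g) t"
    by (rule restricted_linear_system_solvable)
  then have sol': "\<forall>t\<in>suppP u. comp (?H d) t = - comp ?g t" by (simp add: comp_minus)
  note step = newton_direction_norm_le[OF off sol' curv[OF off] \<open>0 < ?l\<close>]
  have "0 \<le> ?C" using nonneg row_norm_sum_pos[of X Z] by simp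
  have "?l * norm d \<le> ?l * ((?l - \<sigma>) / (2 * (?C + 1)))"
    using step(2) small \<open>0 < ?l\<close> unfolding newton_radius_def Let_def by (simp add: mult.commute)
  then have "?C * norm d \<le> (?l - \<sigma>) / 2"
    using \<open>0 < ?l\<close> \<open>0 \<le> ?C\<close> by (intro le_half_gap_if_le_radius) auto
  moreover have "?F (u + d) \<le> ?F u + ?g \<bullet> d + 1/2 * (d \<bullet> ?H d) + ?C * (norm d)^3"
    by (rule fobj_le_second_order[OF nonneg(1,2)])
  ultimately have "?F (u + d) \<le> ?F u - \<sigma>/2 * (norm d)^2"
    using newton_step_decrease[OF _ curv[OF off] step(1)] by blast
  moreover have "newton_sol ?F u (u + d)"
    unfolding newton_sol_def hessian_fobj gradient_fobj
    using off sol' by (auto simp: comp_add suppP_def)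
  ultimately show ?thesis by (intro exI[of _ "u + d"]) simp
qed

section \<open>Convergent runs of GPNA\<close>

lemma switch_cond_iff:
  "switch_cond F \<epsilon> bk uk \<longleftrightarrow>
     (supp (fst bk) = supp (fst uk) \<or> norm (fst (gradient F uk)) < \<epsilon>) \<and>
     (supp (snd bk) = supp (snd uk) \<or> norm (snd (gradient F uk)) < \<epsilon>)"
  unfolding switch_cond_def by blast

locale convergent_gpna_run =
  fixes L :: loss_kind and a b c :: real and X :: "real^'p1^'n" and Z :: "real^'p2^'n"
    and y :: "real^'n" and s1 s2 :: nat and \<sigma> \<epsilon> \<alpha>0 \<gamma> :: real
    and \<beta> u :: "nat \<Rightarrow> (real^'p1) \<times> (real^'p2)" and q :: "nat \<Rightarrow> nat"
    and P :: "nat \<Rightarrow> real \<Rightarrow> (real^'p1) \<times> (real^'p2)" and v :: "nat \<Rightarrow> (real^'p1) \<times> (real^'p2)"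
    and \<beta>s :: "(real^'p1) \<times> (real^'p2)"
  assumes nonneg: "0 \<le> a" "0 \<le> b" "0 \<le> c"
    and params: "0 < \<sigma>" "0 < \<alpha>0" "0 < \<gamma>"
    and run: "gpna_run (fobj L a b c X Z y) s1 s2 \<sigma> \<epsilon> \<alpha>0 \<gamma> \<beta> u q P v"
    and lim: "\<beta> \<longlonglongrightarrow> \<beta>s"
begin

abbreviation "F \<equiv> fobj L a b c X Z y"
abbreviation "G \<equiv> fobj_grad L a b c X Z y"

definition step :: "nat \<Rightarrow> real" where
  "step k = \<alpha>0 * \<gamma> ^ q k"

definition newton_accepted :: "nat \<Rightarrow> bool" where
  "newton_accepted k \<longleftrightarrow> switch_cond F \<epsilon> (\<beta> k) (u k) \<and>
     (\<exists>w. newton_sol F (u k) w \<and> F w \<le> F (u k) - \<sigma>/2 * (norm (w - u k))^2)"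

lemma step_pos: "0 < step k"
  using params by (simp add: step_def)

lemma u_eq: "u k = P k (step k)"
  using run unfolding gpna_run_def step_def by auto

lemma P_proj:
  assumes "0 < \<alpha>"
  shows "fst (P k \<alpha>) \<in> proj_sparse s1 (fst (\<beta> k) - \<alpha> *\<^sub>R fst (G (\<beta> k)))"
    and "snd (P k \<alpha>) \<in> proj_sparse s2 (snd (\<beta> k) - \<alpha> *\<^sub>R snd (G (\<beta> k)))"
  using run assms unfolding gpna_run_def gradient_fobj by auto

lemma u_proj:
  "fst (u k) \<in> proj_sparse s1 (fst (\<beta> k) - step k *\<^sub>R fst (G (\<beta> k)))"
  "snd (u k) \<in> proj_sparse s2 (snd (\<beta> k) - step k *\<^sub>R snd (G (\<beta> k)))"
  using P_proj[OF step_pos] u_eq by simp_all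

lemma l0_u: "l0 (fst (u k)) \<le> s1" "l0 (snd (u k)) \<le> s2"
  using u_proj by (auto intro: proj_sparse_l0_le)

lemma armijo_fails_before:
  "q' < q k \<Longrightarrow> \<not> F (P k (\<alpha>0 * \<gamma> ^ q')) \<le> F (\<beta> k) - \<sigma>/2 * (norm (P k (\<alpha>0 * \<gamma> ^ q') - \<beta> k))^2"
  using run unfolding gpna_run_def by auto

lemma F_u_le: "F (u k) \<le> F (\<beta> k) - \<sigma>/2 * (norm (u k - \<beta> k))^2"
  using run u_eq unfolding gpna_run_def step_def by auto

lemma next_iterate_if:
  "if newton_accepted k
   then newton_sol F (u k) (v k) \<and> F (v k) \<le> F (u k) - \<sigma>/2 * (norm (v k - u k))^2 \<and> \<beta> (Suc k) = v k
   else \<beta> (Suc k) = u k"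
proof -
  have "\<forall>k. if newton_accepted k
     then newton_sol F (u k) (v k) \<and> F (v k) \<le> F (u k) - \<sigma>/2 * (norm (v k - u k))^2 \<and> \<beta> (Suc k) = v k
     else \<beta> (Suc k) = u k"
    using run unfolding gpna_run_def newton_accepted_def by (elim conjE) assumption
  then show ?thesis by (rule spec)
qed

lemma next_iterate:
  "newton_accepted k \<Longrightarrow>
     newton_sol F (u k) (v k) \<and> F (v k) \<le> F (u k) - \<sigma>/2 * (norm (v k - u k))^2 \<and> \<beta> (Suc k) = v k"
  "\<not> newton_accepted k \<Longrightarrow> \<beta> (Suc k) = u k"
  using next_iterate_if[of k] by simp_all

lemma F_Suc_le: "F (\<beta> (Suc k)) \<le> F (u k)"
proof (cases "newton_accepted k")
  case True
  moreover have "0 \<le> \<sigma>/2 * (norm (v k - u k))^2" using params(1) by simp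
  ultimately show ?thesis using next_iterate(1) by fastforce
qed (simp add: next_iterate(2))

lemma l0_beta_conj: "l0 (fst (\<beta> k)) \<le> s1 \<and> l0 (snd (\<beta> k)) \<le> s2"
proof (induction k)
  case 0
  then show ?case using run unfolding gpna_run_def SparseSet_def by simp
next
  case (Suc k)
  show ?case
  proof (cases "newton_accepted k")
    case True
    then have "newton_sol F (u k) (v k)" "\<beta> (Suc k) = v k" using next_iterate(1) by auto
    moreover from this(1) have "l0 (fst (v k)) \<le> l0 (fst (u k))" "l0 (snd (v k)) \<le> l0 (snd (u k))"
      unfolding l0_def by (auto intro!: card_mono dest: newton_sol_supp_subset)
    ultimately show ?thesis using l0_u[of k] by simp
  qed (use l0_u next_iterate(2) in auto)
qed

lemma l0_beta: "l0 (fst (\<beta> k)) \<le> s1" "l0 (snd (\<beta> k)) \<le> s2"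
  using l0_beta_conj by auto

lemma u_tendsto: "u \<longlonglongrightarrow> \<beta>s"
proof -
  have "isCont F x" for x by (rule has_derivative_continuous[OF has_derivative_fobj])
  then have F_lim: "(\<lambda>k. F (\<beta> k)) \<longlonglongrightarrow> F \<beta>s" by (rule isCont_tendsto_compose[OF _ lim])
  have "(\<lambda>k. sqrt (2/\<sigma> * (F (\<beta> k) - F (\<beta> (Suc k))))) \<longlonglongrightarrow> sqrt (2/\<sigma> * (F \<beta>s - F \<beta>s))"
    by (intro tendsto_intros F_lim LIMSEQ_Suc)
  then have gap: "(\<lambda>k. sqrt (2/\<sigma> * (F (\<beta> k) - F (\<beta> (Suc k))))) \<longlonglongrightarrow> 0" by simp
  have "norm (u k - \<beta> k) \<le> sqrt (2/\<sigma> * (F (\<beta> k) - F (\<beta> (Suc k))))" for k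
  proof -
    have "(norm (u k - \<beta> k))^2 \<le> 2/\<sigma> * (F (\<beta> k) - F (\<beta> (Suc k)))"
      using F_u_le[of k] F_Suc_le[of k] params(1) by (simp add: field_simps)
    then show ?thesis by (rule real_le_rsqrt)
  qed
  then have "(\<lambda>k. u k - \<beta> k) \<longlonglongrightarrow> 0" by (intro Lim_null_comparison[OF _ gap] always_eventually) auto
  from tendsto_add[OF this lim] show ?thesis by simp
qed

text \<open>Below \<open>1 / (K + \<sigma>)\<close>, \<open>K\<close> the smoothness constant, every trial step passes the Armijo test,
  so backtracking never goes below \<open>\<gamma> / (K + \<sigma>)\<close>.\<close>

lemma step_lower_bound: obtains \<alpha>min where "0 < \<alpha>min" "\<And>k. \<alpha>min \<le> step k"
proof
  let ?\<alpha>\<sigma> = "1 / (fobj_smoothness a b c X Z + \<sigma>)"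
  have "0 \<le> fobj_smoothness a b c X Z" using nonneg by (simp add: fobj_smoothness_def)
  then have "0 < ?\<alpha>\<sigma>" using params(1) by simp
  then show "0 < min \<alpha>0 (\<gamma> * ?\<alpha>\<sigma>)" using params by simp
  fix k
  show "min \<alpha>0 (\<gamma> * ?\<alpha>\<sigma>) \<le> step k"
  proof (cases "q k")
    case (Suc q')
    have "?\<alpha>\<sigma> < \<alpha>0 * \<gamma> ^ q'"
    proof (rule ccontr)
      assume "\<not> ?thesis"
      moreover have "0 < \<alpha>0 * \<gamma> ^ q'" using params by simp
      moreover have "fst (\<beta> k) \<in> SparseSet s1" "snd (\<beta> k) \<in> SparseSet s2"
        using l0_beta[of k] by (simp_all add: SparseSet_def)
      ultimately have "F (P k (\<alpha>0 * \<gamma> ^ q')) \<le> F (\<beta> k) - \<sigma>/2 * (norm (P k (\<alpha>0 * \<gamma> ^ q') - \<beta> k))^2"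
        using P_proj params(1) by (intro fobj_proj_step_decrease[OF nonneg]) auto
      with armijo_fails_before[of q' k] Suc show False by simp
    qed
    then have "\<gamma> * ?\<alpha>\<sigma> < \<gamma> * (\<alpha>0 * \<gamma> ^ q')" using params(3) by (rule mult_strict_left_mono)
    also have "\<dots> = step k" by (simp add: step_def Suc mult.left_commute)
    finally show ?thesis by simp
  qed (simp add: step_def)
qed

lemma grad_tendsto: "(\<lambda>k. G (\<beta> k)) \<longlonglongrightarrow> G \<beta>s" "(\<lambda>k. G (u k)) \<longlonglongrightarrow> G \<beta>s"
proof -
  have "isCont G x" for x by (rule has_derivative_continuous[OF has_derivative_fobj_grad])
  then show "(\<lambda>k. G (\<beta> k)) \<longlonglongrightarrow> G \<beta>s" "(\<lambda>k. G (u k)) \<longlonglongrightarrow> G \<beta>s"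
    using isCont_tendsto_compose lim u_tendsto by blast+
qed

lemma stationary_limit:
  "\<forall>i\<in>supp (fst \<beta>s). fst (G \<beta>s) $ i = 0" "l0 (fst \<beta>s) < s1 \<longrightarrow> fst (G \<beta>s) = 0"
  "\<forall>i\<in>supp (snd \<beta>s). snd (G \<beta>s) $ i = 0" "l0 (snd \<beta>s) < s2 \<longrightarrow> snd (G \<beta>s) = 0"
proof -
  obtain \<alpha>min where \<alpha>min: "0 < \<alpha>min" "\<And>k. \<alpha>min \<le> step k" using step_lower_bound by blast
  note stat1 = proj_sparse_limit_stationary[OF u_proj(1) \<alpha>min(2,1) tendsto_fst[OF lim]
      tendsto_fst[OF u_tendsto] tendsto_fst[OF grad_tendsto(1)]]
  note stat2 = proj_sparse_limit_stationary[OF u_proj(2) \<alpha>min(2,1) tendsto_snd[OF lim]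
      tendsto_snd[OF u_tendsto] tendsto_snd[OF grad_tendsto(1)]]
  show "\<forall>i\<in>supp (fst \<beta>s). fst (G \<beta>s) $ i = 0" "l0 (fst \<beta>s) < s1 \<longrightarrow> fst (G \<beta>s) = 0"
    "\<forall>i\<in>supp (snd \<beta>s). snd (G \<beta>s) $ i = 0" "l0 (snd \<beta>s) < s2 \<longrightarrow> snd (G \<beta>s) = 0"
    by (fact stat1 stat2)+
qed

lemma eventually_supports:
  "eventually (\<lambda>k.
     (l0 (fst \<beta>s) < s1 \<longrightarrow> supp (fst \<beta>s) \<subseteq> supp (fst (\<beta> k)) \<inter> supp (fst (u k))) \<and>
     (l0 (fst \<beta>s) = s1 \<longrightarrow> supp (fst \<beta>s) = supp (fst (\<beta> k)) \<and> supp (fst \<beta>s) = supp (fst (u k))) \<and>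
     (l0 (snd \<beta>s) < s2 \<longrightarrow> supp (snd \<beta>s) \<subseteq> supp (snd (\<beta> k)) \<inter> supp (snd (u k))) \<and>
     (l0 (snd \<beta>s) = s2 \<longrightarrow> supp (snd \<beta>s) = supp (snd (\<beta> k)) \<and> supp (snd \<beta>s) = supp (snd (u k))))
   sequentially"
  using eventually_supp_limit[OF tendsto_fst[OF lim] l0_beta(1)]
    eventually_supp_limit[OF tendsto_fst[OF u_tendsto] l0_u(1)]
    eventually_supp_limit[OF tendsto_snd[OF lim] l0_beta(2)]
    eventually_supp_limit[OF tendsto_snd[OF u_tendsto] l0_u(2)]
  by eventually_elim blast

lemma eventually_switch_cond:
  assumes "0 < \<epsilon>"
  shows "eventually (\<lambda>k. switch_cond F \<epsilon> (\<beta> k) (u k)) sequentially"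
  unfolding switch_cond_iff gradient_fobj
  using eventually_supp_eq_or_norm_less[OF tendsto_fst[OF lim] tendsto_fst[OF u_tendsto] l0_beta(1) l0_u(1)
      tendsto_fst[OF grad_tendsto(2)] stationary_limit(2) assms]
    eventually_supp_eq_or_norm_less[OF tendsto_snd[OF lim] tendsto_snd[OF u_tendsto] l0_beta(2) l0_u(2)
      tendsto_snd[OF grad_tendsto(2)] stationary_limit(4) assms]
  by eventually_elim blast

lemma restricted_grad_tendsto_zero: "(\<lambda>k. restrict_pair (suppP (u k)) (G (u k))) \<longlonglongrightarrow> 0"
  using tendsto_Pair[OF
      restricted_tendsto_zero[OF tendsto_fst[OF u_tendsto] l0_u(1) tendsto_fst[OF grad_tendsto(2)]
        stationary_limit(1,2)]
      restricted_tendsto_zero[OF tendsto_snd[OF u_tendsto] l0_u(2) tendsto_snd[OF grad_tendsto(2)]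
        stationary_limit(3,4)]]
  unfolding restrict_pair_suppP by (simp add: zero_prod_def)

lemma eventually_newton_step_descends:
  assumes "\<sigma> < l_f L a b c X Z (s1 + s2)"
  shows "eventually (\<lambda>k. \<exists>w. newton_sol F (u k) w \<and> F w \<le> F (u k) - \<sigma>/2 * (norm (w - u k))^2)
           sequentially"
proof -
  have "0 < newton_radius L a b c X Z (s1 + s2) \<sigma>"
    using nonneg(1,2) params(1) assms by (intro newton_radius_pos) auto
  from order_tendstoD(2)[OF tendsto_norm_zero[OF restricted_grad_tendsto_zero] this]
  show ?thesis
  proof eventually_elim
    case (elim k)
    have "card (suppP (u k)) \<le> s1 + s2" using card_suppP_le_l0[of "u k"] l0_u[of k] by linarith
    with elim show ?case using fobj_newton_step[OF nonneg(1,2) _ assms] params(1) by simp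
  qed
qed

lemma eventually_newton_accepted:
  assumes "0 < \<epsilon>" "\<sigma> < l_f L a b c X Z (s1 + s2)"
  shows "eventually (\<lambda>k. switch_cond F \<epsilon> (\<beta> k) (u k) \<and> newton_sol F (u k) (v k)
           \<and> F (v k) \<le> F (u k) - \<sigma>/2 * (norm (v k - u k))^2 \<and> \<beta> (Suc k) = v k) sequentially"
  using eventually_switch_cond[OF assms(1)] eventually_newton_step_descends[OF assms(2)]
  by eventually_elim (use next_iterate(1) in \<open>auto simp: newton_accepted_def\<close>)

end

theorem lemma4p4:
  fixes L :: loss_kind
    and X :: "real^'p1^'n" and Z :: "real^'p2^'n" and y :: "real^'n"
    and a b c \<sigma> \<epsilon> \<alpha>0 \<gamma> :: real and s1 s2 :: nat
    and \<beta> u :: "nat \<Rightarrow> (real^'p1) \<times> (real^'p2)" and q :: "nat \<Rightarrow> nat"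
    and P :: "nat \<Rightarrow> real \<Rightarrow> (real^'p1) \<times> (real^'p2)" and v :: "nat \<Rightarrow> (real^'p1) \<times> (real^'p2)"
    and \<beta>s :: "(real^'p1) \<times> (real^'p2)"
  defines "F \<equiv> fobj L a b c X Z y"
  assumes abc: "a > 0" "b > 0" "c > 0"
    and s1: "1 \<le> s1" "s1 \<le> CARD('p1)"
    and s2: "1 \<le> s2" "s2 \<le> CARD('p2)"
    and ylog: "L = Log \<Longrightarrow> (\<forall>i. y$i = 0 \<or> y$i = 1)"
    and sreg: "s_regular (s1 + s2) (cols X Z)"
    and params: "\<sigma> > 0" "\<epsilon> > 0" "0 < \<alpha>0" "\<alpha>0 \<le> 1" "0 < \<gamma>" "\<gamma> < 1"
    and run: "gpna_run F s1 s2 \<sigma> \<epsilon> \<alpha>0 \<gamma> \<beta> u q P v"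
    and lim: "\<beta> \<longlonglongrightarrow> \<beta>s"
  shows "(\<exists>K. \<forall>k\<ge>K.
            (l0 (fst \<beta>s) < s1 \<longrightarrow> supp (fst \<beta>s) \<subseteq> supp (fst (\<beta> k)) \<inter> supp (fst (u k))) \<and>
            (l0 (fst \<beta>s) = s1 \<longrightarrow> supp (fst \<beta>s) = supp (fst (\<beta> k)) \<and> supp (fst \<beta>s) = supp (fst (u k))) \<and>
            (l0 (snd \<beta>s) < s2 \<longrightarrow> supp (snd \<beta>s) \<subseteq> supp (snd (\<beta> k)) \<inter> supp (snd (u k))) \<and>
            (l0 (snd \<beta>s) = s2 \<longrightarrow> supp (snd \<beta>s) = supp (snd (\<beta> k)) \<and> supp (snd \<beta>s) = supp (snd (u k))))
         \<and> (\<sigma> < l_f L a b c X Z (s1 + s2) / 2 \<longrightarrow>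
            (\<exists>K. \<forall>k\<ge>K. switch_cond F \<epsilon> (\<beta> k) (u k) \<and> newton_sol F (u k) (v k)
                 \<and> F (v k) \<le> F (u k) - \<sigma>/2 * (norm (v k - u k))^2 \<and> \<beta> (Suc k) = v k))"
proof -
  interpret convergent_gpna_run L a b c X Z y s1 s2 \<sigma> \<epsilon> \<alpha>0 \<gamma> \<beta> u q P v \<beta>s
    using abc params run lim unfolding F_def by unfold_locales auto
  have "\<sigma> < l_f L a b c X Z (s1 + s2)" if "\<sigma> < l_f L a b c X Z (s1 + s2) / 2"
    using that \<open>\<sigma> > 0\<close> by linarith
  then show ?thesis
    using eventually_supports eventually_newton_accepted[OF \<open>\<epsilon> > 0\<close>]
    unfolding F_def eventually_sequentially by blast
qed

end
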